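(* Let $X$ be a compact smooth $n$-dimensional manifold and $P$ an $h$-differential operator on $X$ of the form $\sum_{|\alpha|\le m}a_\alpha(x;h)(hD_x)^\alpha$ in local coordinates, with coefficients uniformly bounded in $C^\infty$, $a_\alpha=a_\alpha^0+\mathcal{O}(h)$ in $C^\infty$, $a_\alpha$ independent of $h$ for $|\alpha|=m$, and classically elliptic: $|\sum_{|\alpha|=m}a_\alpha(x)\xi^\alpha|\ge\frac1C|\xi|^m$. Let $p(x,\xi)=\sum_{|\alpha|\le m}a^0_\alpha(x)\xi^\alpha$, fix $z\in\mathbb{C}$, let $s=|p-z|^2$, and for $0<\alpha\ll 1$ let $\Lambda=\left(\frac{\alpha+s}{1+s}\right)^{1/2}$. Then for every choice of local coordinates $x$ on $X$, with $(x,\xi)$ the corresponding canonical coordinates on $T^*X$, for all $\ell\in\mathbb{R}$ and $\widetilde\alpha,\beta\in\mathbb{N}^n$ we have, uniformly in $\xi$ and in $\alpha$ and locally uniformly in $x$, $$\partial_x^{\widetilde\alpha}\partial_\xi^\beta\Big(1+\frac s\alpha\Big)^\ell=\mathcal{O}(1)\Big(1+\frac s\alpha\Big)^\ell\Lambda^{-|\widetilde\alpha|-|\beta|}\langle\xi\rangle^{-|\beta|}.$$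
   Context: $\langle\xi\rangle=(1+|\xi|^2)^{1/2}$. Note $\sqrt\alpha\le\Lambda\le1$. *)

theory Defs
  imports "HOL-Analysis.Analysis"
begin

definition dir_deriv :: "'a::real_normed_vector \<Rightarrow> ('a \<Rightarrow> 'b::real_normed_vector) \<Rightarrow> 'a \<Rightarrow> 'b" where
  "dir_deriv v f y = vector_derivative (\<lambda>t::real. f (y + t *\<^sub>R v)) (at 0)"

fun iter_deriv :: "'a::real_normed_vector list \<Rightarrow> ('a \<Rightarrow> 'b::real_normed_vector) \<Rightarrow> 'a \<Rightarrow> 'b" where
  "iter_deriv [] f = f"
| "iter_deriv (v # vs) f = dir_deriv v (iter_deriv vs f)"

definition smooth_on :: "'a::real_normed_vector set \<Rightarrow> ('a \<Rightarrow> 'b::real_normed_vector) \<Rightarrow> bool" where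
  "smooth_on U f \<longleftrightarrow> (\<forall>vs. iter_deriv vs f differentiable_on U)"

definition mi_len :: "('n::finite \<Rightarrow> nat) \<Rightarrow> nat" where
  "mi_len \<beta> = (\<Sum>i\<in>UNIV. \<beta> i)"

definition monom :: "real^'n::finite \<Rightarrow> ('n \<Rightarrow> nat) \<Rightarrow> complex" where
  "monom \<xi> \<beta> = (\<Prod>i\<in>UNIV. complex_of_real ((\<xi> $ i) ^ \<beta> i))"

definition symb :: "nat \<Rightarrow> (('n::finite \<Rightarrow> nat) \<Rightarrow> real^'n \<Rightarrow> complex) \<Rightarrow> real^'n \<Rightarrow> real^'n \<Rightarrow> complex" where
  "symb m a x \<xi> = (\<Sum>\<beta>\<in>{\<beta>. mi_len \<beta> \<le> m}. a \<beta> x * monom \<xi> \<beta>)"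

definition princ :: "nat \<Rightarrow> (('n::finite \<Rightarrow> nat) \<Rightarrow> real^'n \<Rightarrow> complex) \<Rightarrow> real^'n \<Rightarrow> real^'n \<Rightarrow> complex" where
  "princ m a x \<xi> = (\<Sum>\<beta>\<in>{\<beta>. mi_len \<beta> = m}. a \<beta> x * monom \<xi> \<beta>)"

definition jbr :: "real^'n::finite \<Rightarrow> real" where
  "jbr \<xi> = sqrt (1 + (norm \<xi>)\<^sup>2)"

text \<open>Coordinate directions on T*U = U x R^n in canonical coordinates (x, xi).\<close>
definition dx :: "'n::finite \<Rightarrow> (real^'n) \<times> (real^'n)" where
  "dx i = (axis i 1, 0)"
definition dxi :: "'n::finite \<Rightarrow> (real^'n) \<times> (real^'n)" where
  "dxi i = (0, axis i 1)"

end

theory Submission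
  imports Defs
begin

text \<open>Write \<open>s = |q|\<^sup>2\<close> with \<open>q = p - z\<close>. Since \<open>q\<close> is a symbol of order \<open>m\<close>, \<open>s\<close> is one of
  order \<open>2m\<close>, and ellipticity gives \<open>\<langle>\<xi>\<rangle>\<^sup>2\<^sup>m \<lesssim> 1 + s\<close> locally uniformly in \<open>x\<close>. Hence any
  derivative of \<open>s\<close> of order \<open>k \<ge> 1\<close>, \<open>j\<close> of them in \<open>\<xi>\<close>, is \<open>O((\<alpha> + s) \<Lambda>\<^sup>-\<^sup>k \<langle>\<xi>\<rangle>\<^sup>-\<^sup>j)\<close>:
  for \<open>k = 1\<close> because \<open>|\<partial>s| \<le> 2|q||\<partial>q| \<lesssim> s\<^sup>1\<^sup>/\<^sup>2 (1 + s)\<^sup>1\<^sup>/\<^sup>2\<close>, for \<open>k \<ge> 2\<close> because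
  \<open>1 + s = (\<alpha> + s) \<Lambda>\<^sup>-\<^sup>2\<close> and \<open>\<Lambda> \<le> 1\<close>. The estimate for \<open>(1 + s/\<alpha>)\<^sup>l\<close> then follows by induction
  on the number of derivatives from \<open>\<partial>(1 + s/\<alpha>)\<^sup>l = l (1 + s/\<alpha>)\<^sup>l \<partial>s / (\<alpha> + s)\<close> and the
  Leibniz rule.\<close>

section \<open>Iterated directional derivatives\<close>

lemma iter_deriv_append: "iter_deriv (xs @ ys) f = iter_deriv xs (iter_deriv ys f)"
  by (induction xs) auto

lemma dir_deriv_at:
  assumes "(f has_derivative f') (at y)"
  shows "dir_deriv v f y = f' v"
proof -
  have line: "((\<lambda>t::real. y + t *\<^sub>R v) has_derivative (\<lambda>t. t *\<^sub>R v)) (at 0)"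
    by (auto intro!: derivative_eq_intros)
  have "(f has_derivative f') (at (y + 0 *\<^sub>R v))" using assms by simp
  from diff_chain_at[OF line this]
  have "((\<lambda>t::real. f (y + t *\<^sub>R v)) has_derivative (\<lambda>t. f' (t *\<^sub>R v))) (at 0)"
    by (simp add: o_def)
  moreover have "(\<lambda>t. f' (t *\<^sub>R v)) = (\<lambda>t. t *\<^sub>R f' v)"
    using has_derivative_bounded_linear[OF assms] by (simp add: linear_simps)
  ultimately show ?thesis
    unfolding dir_deriv_def by (intro vector_derivative_at) (simp add: has_vector_derivative_def)
qed

lemma dir_deriv_cong_open:
  assumes "open S" "y \<in> S" "\<And>y. y \<in> S \<Longrightarrow> f y = g y"
  shows "dir_deriv v f y = dir_deriv v g y"
proof -
  define T where "T = {t::real. y + t *\<^sub>R v \<in> S}"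
  have "T = (\<lambda>t. y + t *\<^sub>R v) -` S" by (auto simp: T_def)
  moreover have "continuous_on UNIV (\<lambda>t::real. y + t *\<^sub>R v)" by (intro continuous_intros)
  ultimately have "open T"
    using open_vimage assms(1) by metis
  moreover have "0 \<in> T" using assms(2) by (simp add: T_def)
  ultimately have "((\<lambda>t. f (y + t *\<^sub>R v)) has_vector_derivative d) (at 0) \<longleftrightarrow>
     ((\<lambda>t. g (y + t *\<^sub>R v)) has_vector_derivative d) (at 0)" for d
    using has_vector_derivative_transform_within_open[of _ _ 0 T] assms(3) unfolding T_def
    by (metis (no_types, lifting) mem_Collect_eq)
  then show ?thesis unfolding dir_deriv_def vector_derivative_def by simp
qed

lemma iter_deriv_cong_open:
  assumes "open S" "\<And>y. y \<in> S \<Longrightarrow> f y = g y" "y \<in> S"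
  shows "iter_deriv vs f y = iter_deriv vs g y"
  using assms(3)
proof (induction vs arbitrary: y)
  case Nil then show ?case using assms by simp
next
  case (Cons v vs)
  then show ?case
    using dir_deriv_cong_open[OF assms(1) Cons.prems, of "iter_deriv vs f" "iter_deriv vs g"] by simp
qed

lemma differentiable_on_cong_open:
  assumes "open S" "f differentiable_on S" "\<And>y. y \<in> S \<Longrightarrow> f y = g y"
  shows "g differentiable_on S"
  using assms unfolding differentiable_on_eq_differentiable_at[OF assms(1)] differentiable_def
  by (meson has_derivative_transform_within_open)

lemma differentiable_on_imp_has_derivative:
  assumes "open S" "f differentiable_on S" "y \<in> S"
  obtains f' where "(f has_derivative f') (at y)"
  using assms unfolding differentiable_on_eq_differentiable_at[OF assms(1)] differentiable_def
  by blast

lemma dir_deriv_const: "dir_deriv v (\<lambda>_. c) = (\<lambda>_. 0)"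
  unfolding dir_deriv_def by (rule ext, rule vector_derivative_at) simp

lemma iter_deriv_const: "vs \<noteq> [] \<Longrightarrow> iter_deriv vs (\<lambda>_. c) = (\<lambda>_. 0)"
proof (induction vs)
  case (Cons v vs)
  then show ?case by (cases vs) (auto simp: dir_deriv_const)
qed simp

lemma dir_deriv_zero: "dir_deriv 0 f = (\<lambda>_. 0)"
  unfolding dir_deriv_def by (rule ext, rule vector_derivative_at) simp

lemma iter_deriv_zero: "0 \<in> set vs \<Longrightarrow> iter_deriv vs f = (\<lambda>_. 0)"
proof (induction vs)
  case (Cons v vs)
  then show ?case by (cases "v = 0") (auto simp: dir_deriv_zero dir_deriv_const)
qed simp

lemma dir_deriv_bounded_linear: "bounded_linear L \<Longrightarrow> dir_deriv v L = (\<lambda>_. L v)"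
  by (rule ext, rule dir_deriv_at, rule bounded_linear_imp_has_derivative)

text \<open>The hypotheses on derivatives of order below \<open>length vs\<close> (rather than smoothness)
  allow smoothness of a function to be proved by induction on the order of differentiation.\<close>

lemma iter_deriv_linear:
  assumes L: "bounded_linear L" and S: "open S"
    and f: "\<And>us. length us < length vs \<Longrightarrow> iter_deriv us f differentiable_on S"
    and y: "y \<in> S"
  shows "iter_deriv vs (\<lambda>y. L (f y)) y = L (iter_deriv vs f y)"
  using f y
proof (induction vs arbitrary: y)
  case Nil then show ?case by simp
next
  case (Cons v vs)
  have IH: "iter_deriv vs (\<lambda>y. L (f y)) y = L (iter_deriv vs f y)" if "y \<in> S" for y
    using Cons.IH Cons.prems(1) that by simp
  obtain F' where F': "(iter_deriv vs f has_derivative F') (at y)"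
    using differentiable_on_imp_has_derivative[OF S Cons.prems(1)[of vs] Cons.prems(2)] by auto
  have "iter_deriv (v # vs) (\<lambda>y. L (f y)) y = dir_deriv v (\<lambda>y. L (iter_deriv vs f y)) y"
    using dir_deriv_cong_open[OF S Cons.prems(2), of "iter_deriv vs (\<lambda>y. L (f y))"] IH by simp
  also have "\<dots> = L (F' v)"
    by (rule dir_deriv_at) (rule bounded_linear.has_derivative[OF L F'])
  also have "\<dots> = L (iter_deriv (v # vs) f y)" using dir_deriv_at[OF F'] by simp
  finally show ?case .
qed

lemma differentiable_on_iter_deriv_linear:
  assumes L: "bounded_linear L" and S: "open S"
    and f: "\<And>us. length us \<le> length vs \<Longrightarrow> iter_deriv us f differentiable_on S"
  shows "iter_deriv vs (\<lambda>y. L (f y)) differentiable_on S"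
proof (rule differentiable_on_cong_open[OF S])
  show "(\<lambda>y. L (iter_deriv vs f y)) differentiable_on S"
    using f[of vs] unfolding differentiable_on_def
    by (auto intro: differentiable_compose[OF bounded_linear_imp_differentiable[OF L]])
  show "L (iter_deriv vs f y) = iter_deriv vs (\<lambda>y. L (f y)) y" if "y \<in> S" for y
    using iter_deriv_linear[OF L S _ that, of vs f] f by simp
qed

lemma iter_deriv_add:
  assumes S: "open S"
    and f: "\<And>us. length us < length vs \<Longrightarrow> iter_deriv us f differentiable_on S"
    and g: "\<And>us. length us < length vs \<Longrightarrow> iter_deriv us g differentiable_on S"
    and y: "y \<in> S"
  shows "iter_deriv vs (\<lambda>y. f y + g y) y = iter_deriv vs f y + iter_deriv vs g y"
  using f g y
proof (induction vs arbitrary: y)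
  case Nil then show ?case by simp
next
  case (Cons v vs)
  have IH: "iter_deriv vs (\<lambda>y. f y + g y) y = iter_deriv vs f y + iter_deriv vs g y"
    if "y \<in> S" for y
    using Cons.IH Cons.prems(1,2) that by simp
  obtain F' where F': "(iter_deriv vs f has_derivative F') (at y)"
    using differentiable_on_imp_has_derivative[OF S Cons.prems(1)[of vs] Cons.prems(3)] by auto
  obtain G' where G': "(iter_deriv vs g has_derivative G') (at y)"
    using differentiable_on_imp_has_derivative[OF S Cons.prems(2)[of vs] Cons.prems(3)] by auto
  have "iter_deriv (v # vs) (\<lambda>y. f y + g y) y =
      dir_deriv v (\<lambda>y. iter_deriv vs f y + iter_deriv vs g y) y"
    using dir_deriv_cong_open[OF S Cons.prems(3), of "iter_deriv vs (\<lambda>y. f y + g y)"] IH by simp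
  also have "\<dots> = F' v + G' v"
    by (rule dir_deriv_at) (rule has_derivative_add[OF F' G'])
  also have "\<dots> = iter_deriv (v # vs) f y + iter_deriv (v # vs) g y"
    using dir_deriv_at[OF F'] dir_deriv_at[OF G'] by simp
  finally show ?case .
qed

lemma differentiable_on_iter_deriv_add:
  assumes S: "open S"
    and f: "\<And>us. length us \<le> length vs \<Longrightarrow> iter_deriv us f differentiable_on S"
    and g: "\<And>us. length us \<le> length vs \<Longrightarrow> iter_deriv us g differentiable_on S"
  shows "iter_deriv vs (\<lambda>y. f y + g y) differentiable_on S"
proof (rule differentiable_on_cong_open[OF S])
  show "(\<lambda>y. iter_deriv vs f y + iter_deriv vs g y) differentiable_on S"
    using f[of vs] g[of vs] by (auto intro: differentiable_on_add)
  show "iter_deriv vs f y + iter_deriv vs g y = iter_deriv vs (\<lambda>y. f y + g y) y" if "y \<in> S" for y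
    using iter_deriv_add[OF S _ _ that, of vs f g] f g by simp
qed

text \<open>\<open>splits vs\<close> lists, with multiplicity, the ways of distributing the derivatives in \<open>vs\<close>
  between the two factors of a product.\<close>

fun splits :: "'a list \<Rightarrow> ('a list \<times> 'a list) list" where
  "splits [] = [([], [])]"
| "splits (v # vs) = concat (map (\<lambda>(a, b). [(v # a, b), (a, v # b)]) (splits vs))"

lemma splits_props:
  assumes "(a, b) \<in> set (splits vs)"
  shows "length a + length b = length vs" "set a \<subseteq> set vs" "set b \<subseteq> set vs"
    "length (filter P a) + length (filter P b) = length (filter P vs)"
  using assms by (induction vs arbitrary: a b) fastforce+

lemma sum_list_concat: "sum_list (concat xss) = sum_list (map sum_list xss)"
  by (induction xss) auto

lemma has_derivative_sum_list:
  assumes "\<And>x. x \<in> set xs \<Longrightarrow> (F x has_derivative F' x) (at y)"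
  shows "((\<lambda>y. \<Sum>x\<leftarrow>xs. F x y) has_derivative (\<lambda>h. \<Sum>x\<leftarrow>xs. F' x h)) (at y)"
  using assms by (induction xs) (auto intro!: has_derivative_add)

lemma norm_sum_list_le:
  assumes "\<And>x. x \<in> set xs \<Longrightarrow> norm (F x) \<le> G x"
  shows "norm (\<Sum>x\<leftarrow>xs. F x) \<le> (\<Sum>x\<leftarrow>xs. G x)"
  using assms
proof (induction xs)
  case (Cons x xs)
  then show ?case using norm_triangle_ineq[of "F x" "\<Sum>x\<leftarrow>xs. F x"] by force
qed simp

lemma iter_deriv_mult:
  fixes f g :: "'a::real_normed_vector \<Rightarrow> 'b::real_normed_algebra"
  assumes S: "open S"
    and f: "\<And>us. length us < length vs \<Longrightarrow> iter_deriv us f differentiable_on S"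
    and g: "\<And>us. length us < length vs \<Longrightarrow> iter_deriv us g differentiable_on S"
    and y: "y \<in> S"
  shows "iter_deriv vs (\<lambda>y. f y * g y) y =
    (\<Sum>(a, b)\<leftarrow>splits vs. iter_deriv a f y * iter_deriv b g y)"
  using f g y
proof (induction vs arbitrary: y)
  case Nil then show ?case by simp
next
  case (Cons v vs)
  have IH: "iter_deriv vs (\<lambda>y. f y * g y) y =
      (\<Sum>(a, b)\<leftarrow>splits vs. iter_deriv a f y * iter_deriv b g y)" if "y \<in> S" for y
    using Cons.IH Cons.prems(1,2) that by simp
  define F' where "F' a = frechet_derivative (iter_deriv a f) (at y)" for a
  define G' where "G' a = frechet_derivative (iter_deriv a g) (at y)" for a
  have F': "(iter_deriv a f has_derivative F' a) (at y)"
    and G': "(iter_deriv b g has_derivative G' b) (at y)"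
    if "(a, b) \<in> set (splits vs)" for a b
  proof -
    have "length a < length (v # vs)" "length b < length (v # vs)"
      using splits_props(1)[OF that] by auto
    then have "iter_deriv a f differentiable (at y)" "iter_deriv b g differentiable (at y)"
      using Cons.prems S unfolding differentiable_on_eq_differentiable_at[OF S] by blast+
    then show "(iter_deriv a f has_derivative F' a) (at y)" "(iter_deriv b g has_derivative G' b) (at y)"
      unfolding F'_def G'_def by (simp_all add: frechet_derivative_works[symmetric])
  qed
  let ?T = "\<lambda>(a, b) y. iter_deriv a f y * iter_deriv b g y"
  let ?T' = "\<lambda>(a, b) h. iter_deriv a f y * G' b h + F' a h * iter_deriv b g y"
  have "iter_deriv (v # vs) (\<lambda>y. f y * g y) y = dir_deriv v (\<lambda>y. \<Sum>x\<leftarrow>splits vs. ?T x y) y"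
    using dir_deriv_cong_open[OF S Cons.prems(3), of "iter_deriv vs (\<lambda>y. f y * g y)"] IH
    by (simp add: case_prod_beta')
  also have "\<dots> = (\<Sum>x\<leftarrow>splits vs. ?T' x v)"
    by (intro dir_deriv_at has_derivative_sum_list) (auto intro!: has_derivative_mult F' G')
  also have "\<dots> = (\<Sum>x\<leftarrow>splits vs. \<Sum>(a, b)\<leftarrow>(\<lambda>(a, b). [(v # a, b), (a, v # b)]) x.
      iter_deriv a f y * iter_deriv b g y)"
    by (intro arg_cong[where f=sum_list] map_cong)
       (auto simp: dir_deriv_at[OF F'] dir_deriv_at[OF G'] add.commute)
  also have "\<dots> = (\<Sum>(a, b)\<leftarrow>splits (v # vs). iter_deriv a f y * iter_deriv b g y)"
    by (simp only: splits.simps map_concat sum_list_concat map_map o_def)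
  finally show ?case .
qed

lemma differentiable_on_iter_deriv_mult:
  fixes f g :: "'a::real_normed_vector \<Rightarrow> 'b::real_normed_algebra"
  assumes S: "open S"
    and f: "\<And>us. length us \<le> length vs \<Longrightarrow> iter_deriv us f differentiable_on S"
    and g: "\<And>us. length us \<le> length vs \<Longrightarrow> iter_deriv us g differentiable_on S"
  shows "iter_deriv vs (\<lambda>y. f y * g y) differentiable_on S"
proof (rule differentiable_on_cong_open[OF S])
  show "(\<lambda>y. \<Sum>(a, b)\<leftarrow>splits vs. iter_deriv a f y * iter_deriv b g y) differentiable_on S"
    unfolding differentiable_on_eq_differentiable_at[OF S]
  proof
    fix y assume y: "y \<in> S"
    let ?T = "\<lambda>x y. iter_deriv (fst x) f y * iter_deriv (snd x) g y"
    have "(?T x has_derivative frechet_derivative (?T x) (at y)) (at y)"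
      if "x \<in> set (splits vs)" for x
    proof -
      have "length (fst x) \<le> length vs" "length (snd x) \<le> length vs"
        using splits_props(1)[of "fst x" "snd x" vs] that by simp_all
      then have "iter_deriv (fst x) f differentiable (at y)" "iter_deriv (snd x) g differentiable (at y)"
        using f g y unfolding differentiable_on_eq_differentiable_at[OF S] by blast+
      then have "?T x differentiable (at y)" by (rule differentiable_mult)
      then show ?thesis using frechet_derivative_works by blast
    qed
    from has_derivative_sum_list[where xs="splits vs" and F="?T", OF this]
    show "(\<lambda>y. \<Sum>(a, b)\<leftarrow>splits vs. iter_deriv a f y * iter_deriv b g y) differentiable (at y)"
      unfolding differentiable_def case_prod_beta' by blast
  qed
  show "(\<Sum>(a, b)\<leftarrow>splits vs. iter_deriv a f y * iter_deriv b g y) = iter_deriv vs (\<lambda>y. f y * g y) y"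
    if "y \<in> S" for y
    using iter_deriv_mult[OF S _ _ that, of vs f g] f g by simp
qed

lemma smooth_on_iter_deriv: "smooth_on S f \<Longrightarrow> smooth_on S (iter_deriv vs f)"
  unfolding smooth_on_def by (metis iter_deriv_append)

lemma smooth_on_imp_differentiable_on: "smooth_on S f \<Longrightarrow> iter_deriv vs f differentiable_on S"
  unfolding smooth_on_def by blast

lemma smooth_on_add:
  assumes "open S" "smooth_on S f" "smooth_on S g"
  shows "smooth_on S (\<lambda>y. f y + g y)"
  using assms unfolding smooth_on_def by (auto intro: differentiable_on_iter_deriv_add)

lemma smooth_on_mult:
  fixes f g :: "'a::real_normed_vector \<Rightarrow> 'b::real_normed_algebra"
  assumes "open S" "smooth_on S f" "smooth_on S g"
  shows "smooth_on S (\<lambda>y. f y * g y)"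
  using assms unfolding smooth_on_def by (auto intro: differentiable_on_iter_deriv_mult)

lemma smooth_on_linear:
  assumes "bounded_linear L" "open S" "smooth_on S f"
  shows "smooth_on S (\<lambda>y. L (f y))"
  using assms unfolding smooth_on_def by (auto intro: differentiable_on_iter_deriv_linear)

lemma smooth_on_const: "smooth_on S (\<lambda>_. c)"
  unfolding smooth_on_def
proof
  show "iter_deriv vs (\<lambda>_. c) differentiable_on S" for vs
    by (cases "vs = []") (simp_all add: iter_deriv_const)
qed

lemma smooth_on_bounded_linear:
  assumes L: "bounded_linear L"
  shows "smooth_on S L"
  unfolding smooth_on_def
proof
  show "iter_deriv vs L differentiable_on S" for vs
  proof (cases vs rule: rev_cases)
    case Nil then show ?thesis
      by (simp add: bounded_linear_imp_differentiable[OF L] differentiable_at_imp_differentiable_on)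
  next
    case (snoc ws v)
    then show ?thesis
      by (cases "ws = []") (simp_all add: iter_deriv_append iter_deriv_const dir_deriv_bounded_linear[OF L])
  qed
qed

lemma iter_deriv_fst: "iter_deriv vs (\<lambda>w. h (fst w)) = (\<lambda>w. iter_deriv (map fst vs) h (fst w))"
  by (induction vs) (simp_all add: dir_deriv_def)

lemma smooth_on_fst:
  fixes h :: "'a::real_normed_vector \<Rightarrow> 'b::real_normed_vector"
  assumes U: "open U" and h: "smooth_on U h"
  shows "smooth_on (U \<times> (UNIV :: 'c::real_normed_vector set)) (\<lambda>w. h (fst w))"
  unfolding smooth_on_def iter_deriv_fst
proof (intro allI differentiable_at_imp_differentiable_on)
  fix vs :: "('a \<times> 'c) list" and w :: "'a \<times> 'c" assume w: "w \<in> U \<times> UNIV"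
  have "iter_deriv (map fst vs) h differentiable (at (fst w))"
    using h w U unfolding smooth_on_def differentiable_on_eq_differentiable_at[OF U] by auto
  then show "(\<lambda>w. iter_deriv (map fst vs) h (fst w)) differentiable (at w)"
    using differentiable_chain_at[OF bounded_linear_imp_differentiable[OF bounded_linear_fst]]
    by (simp add: o_def)
qed

section \<open>Symbol classes\<close>

definition coord_dirs :: "((real^'n::finite) \<times> (real^'n)) set" where
  "coord_dirs = range dx \<union> range dxi"

text \<open>On lists of coordinate directions, \<open>xi_count\<close> counts the \<open>\<xi>\<close>-derivatives.\<close>

definition xi_count :: "((real^'n::finite) \<times> (real^'n)) list \<Rightarrow> nat" where
  "xi_count ds = length (filter (\<lambda>v. fst v = 0) ds)"

definition symbol_class ::
  "(real^'n::finite) set \<Rightarrow> nat \<Rightarrow> ((real^'n) \<times> (real^'n) \<Rightarrow> 'b::real_normed_vector) \<Rightarrow> bool" where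
  "symbol_class U k g \<longleftrightarrow> smooth_on (U \<times> UNIV) g \<and>
     (\<forall>K ds. compact K \<longrightarrow> K \<subseteq> U \<longrightarrow> set ds \<subseteq> coord_dirs \<longrightarrow> (\<exists>C. \<forall>x\<in>K. \<forall>\<xi>.
        norm (iter_deriv ds g (x, \<xi>)) \<le> C * jbr \<xi> powr (real k - real (xi_count ds))))"

lemma jbr_ge_1: "1 \<le> jbr \<xi>"
  unfolding jbr_def by simp

lemma jbr_pos: "0 < jbr \<xi>"
  using jbr_ge_1[of \<xi>] by linarith

lemma jbr_nonzero [simp]: "jbr \<xi> \<noteq> 0"
  using jbr_pos[of \<xi>] by linarith

lemma norm_le_jbr: "norm \<xi> \<le> jbr \<xi>"
  unfolding jbr_def by (rule real_le_rsqrt) simp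

lemma jbr_powr_diff: "jbr \<xi> powr (real k - real n) = jbr \<xi> ^ k * jbr \<xi> powr (- real n)"
  by (simp add: powr_add[symmetric] powr_realpow[symmetric] jbr_pos)

lemma xi_count_Nil [simp]: "xi_count [] = 0"
  by (simp add: xi_count_def)

lemma xi_count_append: "xi_count (xs @ ys) = xi_count xs + xi_count ys"
  by (simp add: xi_count_def)

lemma xi_count_dx_dxi: "xi_count (map dx as @ map dxi bs) = length bs"
proof -
  have "filter (\<lambda>v. fst v = 0) (map dx as) = []" by (induction as) (simp_all add: dx_def axis_eq_0_iff)
  moreover have "filter (\<lambda>v. fst v = 0) (map dxi bs) = map dxi bs" by (induction bs) (simp_all add: dxi_def)
  ultimately show ?thesis by (simp add: xi_count_def)
qed

lemma set_dx_dxi_subset: "set (map dx as @ map dxi bs) \<subseteq> coord_dirs"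
  by (auto simp: coord_dirs_def)

lemma xi_count_splits: "(a, b) \<in> set (splits ds) \<Longrightarrow> xi_count a + xi_count b = xi_count ds"
  unfolding xi_count_def by (rule splits_props(4))

lemma symbol_classI:
  assumes "smooth_on (U \<times> UNIV) g"
    and "\<And>K ds. compact K \<Longrightarrow> K \<subseteq> U \<Longrightarrow> set ds \<subseteq> coord_dirs \<Longrightarrow> \<exists>C. \<forall>x\<in>K. \<forall>\<xi>.
      norm (iter_deriv ds g (x, \<xi>)) \<le> C * jbr \<xi> powr (real k - real (xi_count ds))"
  shows "symbol_class U k g"
  using assms unfolding symbol_class_def by blast

lemma symbol_class_smooth: "symbol_class U k g \<Longrightarrow> smooth_on (U \<times> UNIV) g"
  by (simp add: symbol_class_def)

lemma symbol_classE:
  assumes "symbol_class U k g" "compact K" "K \<subseteq> U"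
  obtains C where "\<And>ds x \<xi>. set ds \<subseteq> coord_dirs \<Longrightarrow> x \<in> K \<Longrightarrow>
    norm (iter_deriv ds g (x, \<xi>)) \<le> C ds * jbr \<xi> powr (real k - real (xi_count ds))"
proof -
  have "\<forall>ds. \<exists>C. set ds \<subseteq> coord_dirs \<longrightarrow> (\<forall>x\<in>K. \<forall>\<xi>.
      norm (iter_deriv ds g (x, \<xi>)) \<le> C * jbr \<xi> powr (real k - real (xi_count ds)))"
    using assms unfolding symbol_class_def by blast
  then show thesis using that by metis
qed

lemma symbol_class_mono:
  fixes g :: "(real^'n::finite) \<times> (real^'n) \<Rightarrow> 'b::real_normed_vector"
  assumes g: "symbol_class U k g" and k: "k \<le> k'"
  shows "symbol_class U k' g"
proof (rule symbol_classI)
  show "smooth_on (U \<times> UNIV) g" using g by (rule symbol_class_smooth)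
  fix K and ds :: "((real^'n) \<times> (real^'n)) list"
  assume K: "compact K" "K \<subseteq> U" and ds: "set ds \<subseteq> coord_dirs"
  obtain C where C: "\<And>x \<xi>. x \<in> K \<Longrightarrow>
      norm (iter_deriv ds g (x, \<xi>)) \<le> C ds * jbr \<xi> powr (real k - real (xi_count ds))"
    using symbol_classE[OF g K] ds by metis
  have "C ds * jbr \<xi> powr (real k - real (xi_count ds)) \<le>
      \<bar>C ds\<bar> * jbr \<xi> powr (real k' - real (xi_count ds))" for \<xi> :: "real^'n"
    using k jbr_ge_1[of \<xi>]
    by (intro mult_mono powr_mono) auto
  then show "\<exists>C. \<forall>x\<in>K. \<forall>\<xi>. norm (iter_deriv ds g (x, \<xi>)) \<le> C * jbr \<xi> powr (real k' - real (xi_count ds))"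
    using C order_trans by blast
qed

lemma symbol_class_const: "symbol_class (U :: (real^'n::finite) set) 0 (\<lambda>_. c)"
proof (rule symbol_classI[OF smooth_on_const])
  fix K and ds :: "((real^'n) \<times> (real^'n)) list"
  show "\<exists>C. \<forall>x\<in>K. \<forall>\<xi>. norm (iter_deriv ds (\<lambda>_. c) (x, \<xi>)) \<le> C * jbr \<xi> powr (real 0 - real (xi_count ds))"
  proof (cases "ds = []")
    case True
    then show ?thesis by (intro exI[of _ "norm c"]) simp
  next
    case False
    then show ?thesis by (intro exI[of _ 0]) (simp add: iter_deriv_const)
  qed
qed

context
  fixes U :: "(real^'n::finite) set"
  assumes U: "open U"
begin

lemma open_cotangent: "open (U \<times> (UNIV :: (real^'n) set))"
  using U by (simp add: open_Times)

lemma symbol_class_add: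
  assumes f: "symbol_class U k f" and g: "symbol_class U k g"
  shows "symbol_class U k (\<lambda>w. f w + g w)"
proof (rule symbol_classI)
  note sf = symbol_class_smooth[OF f] and sg = symbol_class_smooth[OF g]
  show "smooth_on (U \<times> UNIV) (\<lambda>w. f w + g w)" by (rule smooth_on_add[OF open_cotangent sf sg])
  fix K and ds :: "((real^'n) \<times> (real^'n)) list"
  assume K: "compact K" "K \<subseteq> U" and ds: "set ds \<subseteq> coord_dirs"
  obtain Cf where Cf: "\<And>ds x \<xi>. set ds \<subseteq> coord_dirs \<Longrightarrow> x \<in> K \<Longrightarrow>
      norm (iter_deriv ds f (x, \<xi>)) \<le> Cf ds * jbr \<xi> powr (real k - real (xi_count ds))"
    using symbol_classE[OF f K] by metis
  obtain Cg where Cg: "\<And>ds x \<xi>. set ds \<subseteq> coord_dirs \<Longrightarrow> x \<in> K \<Longrightarrow>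
      norm (iter_deriv ds g (x, \<xi>)) \<le> Cg ds * jbr \<xi> powr (real k - real (xi_count ds))"
    using symbol_classE[OF g K] by metis
  have "norm (iter_deriv ds (\<lambda>w. f w + g w) (x, \<xi>)) \<le>
      (Cf ds + Cg ds) * jbr \<xi> powr (real k - real (xi_count ds))" if x: "x \<in> K" for x \<xi>
  proof -
    have "(x, \<xi>) \<in> U \<times> UNIV" using x K by auto
    then have "iter_deriv ds (\<lambda>w. f w + g w) (x, \<xi>) = iter_deriv ds f (x, \<xi>) + iter_deriv ds g (x, \<xi>)"
      by (intro iter_deriv_add[OF open_cotangent] smooth_on_imp_differentiable_on sf sg)
    then show ?thesis
      using norm_triangle_ineq[of "iter_deriv ds f (x, \<xi>)" "iter_deriv ds g (x, \<xi>)"]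
        Cf[OF ds x, of \<xi>] Cg[OF ds x, of \<xi>] by (simp add: algebra_simps)
  qed
  then show "\<exists>C. \<forall>x\<in>K. \<forall>\<xi>. norm (iter_deriv ds (\<lambda>w. f w + g w) (x, \<xi>)) \<le> C * jbr \<xi> powr (real k - real (xi_count ds))"
    by blast
qed

lemma symbol_class_mult:
  fixes f g :: "(real^'n) \<times> (real^'n) \<Rightarrow> 'b::real_normed_algebra"
  assumes f: "symbol_class U k f" and g: "symbol_class U k' g"
  shows "symbol_class U (k + k') (\<lambda>w. f w * g w)"
proof (rule symbol_classI)
  note sf = symbol_class_smooth[OF f] and sg = symbol_class_smooth[OF g]
  show "smooth_on (U \<times> UNIV) (\<lambda>w. f w * g w)" by (rule smooth_on_mult[OF open_cotangent sf sg])
  fix K and ds :: "((real^'n) \<times> (real^'n)) list"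
  assume K: "compact K" "K \<subseteq> U" and ds: "set ds \<subseteq> coord_dirs"
  obtain Cf where Cf: "\<And>ds x \<xi>. set ds \<subseteq> coord_dirs \<Longrightarrow> x \<in> K \<Longrightarrow>
      norm (iter_deriv ds f (x, \<xi>)) \<le> Cf ds * jbr \<xi> powr (real k - real (xi_count ds))"
    using symbol_classE[OF f K] by metis
  obtain Cg where Cg: "\<And>ds x \<xi>. set ds \<subseteq> coord_dirs \<Longrightarrow> x \<in> K \<Longrightarrow>
      norm (iter_deriv ds g (x, \<xi>)) \<le> Cg ds * jbr \<xi> powr (real k' - real (xi_count ds))"
    using symbol_classE[OF g K] by metis
  have "norm (iter_deriv ds (\<lambda>w. f w * g w) (x, \<xi>)) \<le>
      (\<Sum>(a, b)\<leftarrow>splits ds. Cf a * Cg b) * jbr \<xi> powr (real (k + k') - real (xi_count ds))"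
    if x: "x \<in> K" for x \<xi>
  proof -
    define J where "J = jbr \<xi> powr (real (k + k') - real (xi_count ds))"
    have "(x, \<xi>) \<in> U \<times> UNIV" using x K by auto
    then have "iter_deriv ds (\<lambda>w. f w * g w) (x, \<xi>) =
        (\<Sum>(a, b)\<leftarrow>splits ds. iter_deriv a f (x, \<xi>) * iter_deriv b g (x, \<xi>))"
      by (intro iter_deriv_mult[OF open_cotangent] smooth_on_imp_differentiable_on sf sg)
    also have "norm \<dots> \<le> (\<Sum>(a, b)\<leftarrow>splits ds. Cf a * Cg b * J)"
    proof (rule norm_sum_list_le, clarify)
      fix a b assume ab: "(a, b) \<in> set (splits ds)"
      have abD: "set a \<subseteq> coord_dirs" "set b \<subseteq> coord_dirs"
        using splits_props(2,3)[OF ab] ds by auto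
      have "norm (iter_deriv a f (x, \<xi>) * iter_deriv b g (x, \<xi>)) \<le>
          norm (iter_deriv a f (x, \<xi>)) * norm (iter_deriv b g (x, \<xi>))"
        by (rule norm_mult_ineq)
      also have "\<dots> \<le> (Cf a * jbr \<xi> powr (real k - real (xi_count a))) *
          (Cg b * jbr \<xi> powr (real k' - real (xi_count b)))"
        using Cf[OF abD(1) x, of \<xi>] Cg[OF abD(2) x, of \<xi>]
        by (intro mult_mono) (auto intro: order_trans[OF norm_ge_zero])
      also have "\<dots> = Cf a * Cg b * J"
      proof -
        have "(real k - real (xi_count a)) + (real k' - real (xi_count b)) =
            real (k + k') - real (xi_count ds)"
          using xi_count_splits[OF ab] by linarith
        then show ?thesis by (simp add: J_def powr_add[symmetric] algebra_simps)
      qed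
      finally show "norm (iter_deriv a f (x, \<xi>) * iter_deriv b g (x, \<xi>)) \<le> Cf a * Cg b * J" .
    qed
    also have "\<dots> = (\<Sum>(a, b)\<leftarrow>splits ds. Cf a * Cg b) * J"
      using sum_list_mult_const[of "\<lambda>(a, b). Cf a * Cg b" J "splits ds"]
      by (simp add: case_prod_beta')
    finally show ?thesis unfolding J_def .
  qed
  then show "\<exists>C. \<forall>x\<in>K. \<forall>\<xi>. norm (iter_deriv ds (\<lambda>w. f w * g w) (x, \<xi>)) \<le>
      C * jbr \<xi> powr (real (k + k') - real (xi_count ds))"
    by blast
qed

lemma symbol_class_linear:
  assumes L: "bounded_linear L" and g: "symbol_class U k g"
  shows "symbol_class U k (\<lambda>w. L (g w))"
proof (rule symbol_classI)
  note sg = symbol_class_smooth[OF g]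
  show "smooth_on (U \<times> UNIV) (\<lambda>w. L (g w))" by (rule smooth_on_linear[OF L open_cotangent sg])
  obtain B where B: "\<And>y. norm (L y) \<le> norm y * B" "B > 0"
    using bounded_linear.pos_bounded[OF L] by blast
  fix K and ds :: "((real^'n) \<times> (real^'n)) list"
  assume K: "compact K" "K \<subseteq> U" and ds: "set ds \<subseteq> coord_dirs"
  obtain C where C: "\<And>ds x \<xi>. set ds \<subseteq> coord_dirs \<Longrightarrow> x \<in> K \<Longrightarrow>
      norm (iter_deriv ds g (x, \<xi>)) \<le> C ds * jbr \<xi> powr (real k - real (xi_count ds))"
    using symbol_classE[OF g K] by metis
  have "norm (iter_deriv ds (\<lambda>w. L (g w)) (x, \<xi>)) \<le>
      (C ds * B) * jbr \<xi> powr (real k - real (xi_count ds))" if x: "x \<in> K" for x \<xi>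
  proof -
    have "(x, \<xi>) \<in> U \<times> UNIV" using x K by auto
    then have "iter_deriv ds (\<lambda>w. L (g w)) (x, \<xi>) = L (iter_deriv ds g (x, \<xi>))"
      by (intro iter_deriv_linear[OF L open_cotangent] smooth_on_imp_differentiable_on sg)
    moreover have "norm (iter_deriv ds g (x, \<xi>)) * B \<le> C ds * jbr \<xi> powr (real k - real (xi_count ds)) * B"
      using C[OF ds x, of \<xi>] B(2) by (intro mult_right_mono) auto
    ultimately show ?thesis using B(1)[of "iter_deriv ds g (x, \<xi>)"] by (simp add: algebra_simps)
  qed
  then show "\<exists>C. \<forall>x\<in>K. \<forall>\<xi>. norm (iter_deriv ds (\<lambda>w. L (g w)) (x, \<xi>)) \<le> C * jbr \<xi> powr (real k - real (xi_count ds))"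
    by blast
qed

lemma symbol_class_sum:
  assumes "finite B" "\<And>b. b \<in> B \<Longrightarrow> symbol_class U k (F b)"
  shows "symbol_class U k (\<lambda>w. \<Sum>b\<in>B. F b w)"
  using assms
proof (induction B rule: finite_induct)
  case empty
  then show ?case using symbol_class_mono[OF symbol_class_const[of U 0]] by simp
next
  case (insert b B)
  then show ?case using symbol_class_add[of k "F b" "\<lambda>w. \<Sum>b\<in>B. F b w"] by simp
qed

lemma symbol_class_power:
  fixes f :: "(real^'n) \<times> (real^'n) \<Rightarrow> 'b::real_normed_algebra_1"
  assumes "symbol_class U k f"
  shows "symbol_class U (k * j) (\<lambda>w. f w ^ j)"
proof (induction j)
  case 0 then show ?case using symbol_class_const[of U 1] by simp
next
  case (Suc j)
  then show ?case using symbol_class_mult[OF assms Suc] by (simp add: add.commute)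
qed

lemma symbol_class_prod:
  fixes F :: "'i \<Rightarrow> (real^'n) \<times> (real^'n) \<Rightarrow> 'b::{real_normed_algebra_1, comm_monoid_mult}"
  assumes "finite I" "\<And>i. i \<in> I \<Longrightarrow> symbol_class U (k i) (F i)"
  shows "symbol_class U (\<Sum>i\<in>I. k i) (\<lambda>w. \<Prod>i\<in>I. F i w)"
  using assms
proof (induction I rule: finite_induct)
  case empty then show ?case using symbol_class_const[of U 1] by simp
next
  case (insert i I)
  then show ?case using symbol_class_mult[of "k i" "F i" "sum k I" "\<lambda>w. \<Prod>i\<in>I. F i w"] by simp
qed

lemma symbol_class_fst:
  assumes h: "smooth_on U h"
  shows "symbol_class U 0 (\<lambda>w. h (fst w))"
proof (rule symbol_classI[OF smooth_on_fst[OF U h]])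
  fix K and ds :: "((real^'n) \<times> (real^'n)) list"
  assume K: "compact K" "K \<subseteq> U" and ds: "set ds \<subseteq> coord_dirs"
  show "\<exists>C. \<forall>x\<in>K. \<forall>\<xi>. norm (iter_deriv ds (\<lambda>w. h (fst w)) (x, \<xi>)) \<le> C * jbr \<xi> powr (real 0 - real (xi_count ds))"
  proof (cases "xi_count ds = 0")
    case False
    then obtain v where "v \<in> set ds" "fst v = 0"
      unfolding xi_count_def by (auto simp: filter_empty_conv)
    then have "0 \<in> set (map fst ds)" by force
    then show ?thesis by (intro exI[of _ 0]) (simp add: iter_deriv_fst iter_deriv_zero)
  next
    case True
    have "continuous_on U (iter_deriv (map fst ds) h)"
      using h by (simp add: smooth_on_def differentiable_imp_continuous_on)
    then have "compact (iter_deriv (map fst ds) h ` K)"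
      using K by (meson compact_continuous_image continuous_on_subset)
    then obtain B where "\<forall>y\<in>iter_deriv (map fst ds) h ` K. norm y \<le> B"
      using compact_imp_bounded bounded_iff by metis
    then show ?thesis using True by (intro exI[of _ B]) (simp add: iter_deriv_fst)
  qed
qed

lemma symbol_class_coord: "symbol_class U 1 (\<lambda>w. of_real (snd w $ i) :: 'b::real_normed_algebra_1)"
proof -
  define L where "L = (\<lambda>w::(real^'n) \<times> (real^'n). of_real (snd w $ i) :: 'b)"
  have L: "bounded_linear L" unfolding L_def
    by (intro bounded_linear_compose[OF bounded_linear_of_real]
        bounded_linear_compose[OF bounded_linear_vec_nth bounded_linear_snd])
  have "symbol_class U 1 L"
  proof (rule symbol_classI[OF smooth_on_bounded_linear[OF L]])
    fix K and ds :: "((real^'n) \<times> (real^'n)) list" assume ds: "set ds \<subseteq> coord_dirs"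
    show "\<exists>C. \<forall>x\<in>K. \<forall>\<xi>. norm (iter_deriv ds L (x, \<xi>)) \<le> C * jbr \<xi> powr (real 1 - real (xi_count ds))"
    proof (cases ds rule: rev_cases)
      case Nil
      have "\<bar>\<xi> $ i\<bar> \<le> jbr \<xi>" for \<xi>
        using component_le_norm_cart[of \<xi> i] norm_le_jbr[of \<xi>] by linarith
      then show ?thesis using Nil by (intro exI[of _ 1]) (simp add: L_def abs_of_pos jbr_pos)
    next
      case (snoc ws v)
      show ?thesis
      proof (cases "ws = []")
        case False
        then show ?thesis
          using snoc by (intro exI[of _ 0]) (simp add: iter_deriv_append dir_deriv_bounded_linear[OF L] iter_deriv_const)
      next
        case True
        from ds snoc obtain j where "v = dx j \<or> v = dxi j" unfolding coord_dirs_def by auto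
        then have "norm (L v) \<le> jbr \<xi> powr (real 1 - real (xi_count [v]))" for \<xi> :: "real^'n"
          using jbr_pos[of \<xi>]
          by (auto simp: L_def dx_def dxi_def axis_def xi_count_def)
        then show ?thesis
          using snoc True by (intro exI[of _ 1]) (simp add: dir_deriv_bounded_linear[OF L])
      qed
    qed
  qed
  then show ?thesis unfolding L_def .
qed

lemma symbol_class_monom: "symbol_class U (mi_len \<beta>) (\<lambda>w. monom (snd w) \<beta>)"
proof -
  have "symbol_class U (\<Sum>i\<in>UNIV. 1 * \<beta> i) (\<lambda>w. \<Prod>i\<in>UNIV. complex_of_real (snd w $ i) ^ \<beta> i)"
    by (intro symbol_class_prod symbol_class_power symbol_class_coord) auto
  then show ?thesis by (simp add: monom_def mi_len_def)
qed

end

section \<open>Elementary estimates\<close>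

lemma finite_mi_len_le: "finite {\<beta>::'n::finite \<Rightarrow> nat. mi_len \<beta> \<le> m}"
proof (rule finite_subset)
  have "\<beta> i \<le> m" if "mi_len \<beta> \<le> m" for \<beta> :: "'n \<Rightarrow> nat" and i
    using that member_le_sum[of i UNIV \<beta>] by (simp add: mi_len_def)
  then show "{\<beta>::'n \<Rightarrow> nat. mi_len \<beta> \<le> m} \<subseteq> {\<beta>. \<forall>i. (i \<in> UNIV \<longrightarrow> \<beta> i \<in> {..m}) \<and> (i \<notin> UNIV \<longrightarrow> \<beta> i = 0)}"
    by auto
  show "finite {\<beta>::'n \<Rightarrow> nat. \<forall>i. (i \<in> UNIV \<longrightarrow> \<beta> i \<in> {..m}) \<and> (i \<notin> UNIV \<longrightarrow> \<beta> i = 0)}"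
    by (rule finite_set_of_finite_funs) auto
qed

text \<open>For \<open>t \<ge> 2\<close> one has \<open>N \<ge> t/2\<close>, and for \<open>t \<ge> 2\<^sup>m\<^sup>+\<^sup>1 C\<^sub>0 A\<close> the lower-order
  contribution \<open>2\<^sup>m C\<^sub>0 A t\<^sup>m\<^sup>-\<^sup>1\<close> is absorbed into \<open>t\<^sup>m/2\<close>.\<close>

lemma power_le_absorb_lower_order:
  fixes t N Q A C0 :: real
  assumes m: "1 \<le> m" and t1: "1 \<le> t" and N0: "0 \<le> N" and tN: "t\<^sup>2 = 1 + N\<^sup>2"
    and C0: "0 < C0" and A: "0 \<le> A" and Q: "0 \<le> Q"
    and est: "N ^ m \<le> C0 * (Q + A * t ^ (m - 1))"
  shows "t ^ m \<le> max 2 (2 ^ (m + 1) * C0 * A) ^ m + 2 ^ (m + 1) * C0 * Q"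
proof (cases "t < max 2 (2 ^ (m + 1) * C0 * A)")
  case True
  then have "t ^ m \<le> max 2 (2 ^ (m + 1) * C0 * A) ^ m" using t1 by (intro power_mono) auto
  then show ?thesis using C0 Q by (simp add: add_increasing2)
next
  case False
  then have t2: "2 \<le> t" and tA: "2 ^ (m + 1) * C0 * A \<le> t" by auto
  have "(t / 2)\<^sup>2 \<le> N\<^sup>2" using tN t2 mult_mono[OF t2 t2] by (simp add: power2_eq_square)
  then have "t / 2 \<le> N" using N0 by (rule power2_le_imp_le)
  then have "(t / 2) ^ m \<le> N ^ m" using t1 by (intro power_mono) auto
  then have "t ^ m \<le> 2 ^ m * N ^ m" by (simp add: power_divide divide_le_eq mult.commute)
  also have "\<dots> \<le> 2 ^ m * (C0 * (Q + A * t ^ (m - 1)))" using est by simp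
  finally have "t ^ m \<le> 2 ^ m * C0 * Q + 2 ^ m * C0 * A * t ^ (m - 1)"
    by (simp add: algebra_simps)
  moreover have "2 ^ (m + 1) * C0 * A * t ^ (m - 1) \<le> t * t ^ (m - 1)"
    using tA t1 by (intro mult_right_mono) auto
  moreover have "t * t ^ (m - 1) = t ^ m" using m by (simp add: power_eq_if)
  ultimately have "t ^ m \<le> 2 ^ (m + 1) * C0 * Q" by simp
  then show ?thesis by (simp add: add_increasing)
qed

text \<open>\<open>Lambda_inv \<alpha> \<sigma>\<close> is \<open>\<Lambda>\<^sup>-\<^sup>1\<close> at a point where \<open>s = \<sigma>\<close>.\<close>

definition Lambda_inv :: "real \<Rightarrow> real \<Rightarrow> real" where
  "Lambda_inv \<alpha> \<sigma> = sqrt ((1 + \<sigma>) / (\<alpha> + \<sigma>))"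

context
  fixes \<alpha> \<sigma> :: real
  assumes \<alpha>: "0 < \<alpha>" and \<sigma>: "0 \<le> \<sigma>"
begin

lemma Lambda_inv_nonneg: "0 \<le> Lambda_inv \<alpha> \<sigma>"
  using \<alpha> \<sigma> by (simp add: Lambda_inv_def)

lemma one_le_Lambda_inv: "\<alpha> \<le> 1 \<Longrightarrow> 1 \<le> Lambda_inv \<alpha> \<sigma>"
  using \<alpha> \<sigma> by (simp add: Lambda_inv_def)

lemma one_plus_eq_Lambda_inv: "1 + \<sigma> = (\<alpha> + \<sigma>) * Lambda_inv \<alpha> \<sigma> ^ 2"
  using \<alpha> \<sigma> by (simp add: Lambda_inv_def)

lemma sqrt_mult_le_Lambda_inv: "sqrt \<sigma> * sqrt (1 + \<sigma>) \<le> (\<alpha> + \<sigma>) * Lambda_inv \<alpha> \<sigma>"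
proof -
  have "sqrt \<sigma> * sqrt (1 + \<sigma>) \<le> sqrt (\<alpha> + \<sigma>) * sqrt (1 + \<sigma>)"
    using \<alpha> \<sigma> by (intro mult_right_mono) auto
  also have "\<dots> = (\<alpha> + \<sigma>) * Lambda_inv \<alpha> \<sigma>"
    using \<alpha> \<sigma> by (simp add: Lambda_inv_def real_sqrt_divide field_simps)
  finally show ?thesis .
qed

lemma Lambda_inv_power: "Lambda_inv \<alpha> \<sigma> ^ n = (((\<alpha> + \<sigma>) / (1 + \<sigma>)) powr (1/2)) powr (- real n)"
proof -
  have pos: "0 < (1 + \<sigma>) / (\<alpha> + \<sigma>)" using \<alpha> \<sigma> by simp
  have "(((\<alpha> + \<sigma>) / (1 + \<sigma>)) powr (1/2)) powr (- real n) = ((1 + \<sigma>) / (\<alpha> + \<sigma>)) powr (real n / 2)"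
    using \<alpha> \<sigma> by (simp add: powr_powr powr_divide powr_minus field_simps)
  also have "\<dots> = (((1 + \<sigma>) / (\<alpha> + \<sigma>)) powr (1/2)) powr real n"
    by (simp add: powr_powr)
  also have "\<dots> = (((1 + \<sigma>) / (\<alpha> + \<sigma>)) powr (1/2)) ^ n"
    using \<alpha> \<sigma> by (intro powr_realpow) simp
  finally show ?thesis using pos by (simp add: Lambda_inv_def powr_half_sqrt)
qed

lemma leibniz_term_bound:
  fixes l h A S Ca Cs P Q :: real
  assumes h: "0 \<le> h" and P: "0 \<le> P" and Q: "0 \<le> Q"
    and A: "\<bar>A\<bar> \<le> Ca * (h * \<alpha> / (\<alpha> + \<sigma>)) * P" and S: "\<bar>S\<bar> \<le> Cs * (\<alpha> + \<sigma>) * Q"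
  shows "\<bar>l / \<alpha> * (A * S)\<bar> \<le> \<bar>l\<bar> * \<bar>Ca\<bar> * \<bar>Cs\<bar> * h * (P * Q)"
proof -
  have A': "\<bar>A\<bar> \<le> \<bar>Ca\<bar> * (h * \<alpha> / (\<alpha> + \<sigma>)) * P"
    using A h P \<alpha> \<sigma> by (smt (verit) mult_right_mono zero_le_divide_iff mult_nonneg_nonneg)
  have S': "\<bar>S\<bar> \<le> \<bar>Cs\<bar> * (\<alpha> + \<sigma>) * Q"
    using S Q \<alpha> \<sigma> by (smt (verit) mult_right_mono mult_nonneg_nonneg)
  have "0 \<le> \<bar>Ca\<bar> * (h * \<alpha> / (\<alpha> + \<sigma>)) * P"
    using h P \<alpha> \<sigma> by (intro mult_nonneg_nonneg divide_nonneg_nonneg) auto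
  then have "\<bar>A * S\<bar> \<le> (\<bar>Ca\<bar> * (h * \<alpha> / (\<alpha> + \<sigma>)) * P) * (\<bar>Cs\<bar> * (\<alpha> + \<sigma>) * Q)"
    unfolding abs_mult by (intro mult_mono[OF A' S']) auto
  also have "\<dots> = \<alpha> * (\<bar>Ca\<bar> * \<bar>Cs\<bar> * h * (P * Q))"
    using \<alpha> \<sigma> by (simp add: field_simps)
  finally have AS: "\<bar>A * S\<bar> \<le> \<alpha> * (\<bar>Ca\<bar> * \<bar>Cs\<bar> * h * (P * Q))" .
  have "\<bar>l / \<alpha> * (A * S)\<bar> = \<bar>l\<bar> * \<bar>A * S\<bar> / \<alpha>"
    using \<alpha> by (simp add: abs_mult)
  also have "\<dots> \<le> \<bar>l\<bar> * (\<alpha> * (\<bar>Ca\<bar> * \<bar>Cs\<bar> * h * (P * Q))) / \<alpha>"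
    using \<alpha> AS by (intro divide_right_mono mult_left_mono) auto
  also have "\<dots> = \<bar>l\<bar> * \<bar>Ca\<bar> * \<bar>Cs\<bar> * h * (P * Q)"
    using \<alpha> by simp
  finally show ?thesis .
qed

end

section \<open>The symbol \<open>s = |p - z|\<^sup>2\<close> and the weight \<open>(1 + s/\<alpha>)\<^sup>l\<close>\<close>

locale elliptic_operator =
  fixes U :: "(real^'n::finite) set" and m :: nat
    and a :: "('n \<Rightarrow> nat) \<Rightarrow> real^'n \<Rightarrow> complex" and z :: complex
  assumes open_U: "open U"
    and smooth_coeff: "\<And>\<beta>. mi_len \<beta> \<le> m \<Longrightarrow> smooth_on U (a \<beta>)"
    and elliptic: "\<And>K. compact K \<Longrightarrow> K \<subseteq> U \<Longrightarrow>
      \<exists>C>0. \<forall>x\<in>K. \<forall>\<xi>. norm (princ m a x \<xi>) \<ge> (norm \<xi>) ^ m / C"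
begin

definition q :: "(real^'n) \<times> (real^'n) \<Rightarrow> complex" where
  "q w = symb m a (fst w) (snd w) - z"

definition s :: "(real^'n) \<times> (real^'n) \<Rightarrow> real" where
  "s w = (cmod (q w))\<^sup>2"

lemma s_nonneg: "0 \<le> s w"
  by (simp add: s_def)

lemma symbol_class_coeff_sum:
  assumes "B \<subseteq> {\<beta>. mi_len \<beta> \<le> k}" "k \<le> m"
  shows "symbol_class U k (\<lambda>w. \<Sum>\<beta>\<in>B. a \<beta> (fst w) * monom (snd w) \<beta>)"
proof (rule symbol_class_sum[OF open_U finite_subset[OF assms(1) finite_mi_len_le]])
  fix \<beta> assume "\<beta> \<in> B"
  then have "mi_len \<beta> \<le> k" using assms(1) by auto
  moreover have "symbol_class U (0 + mi_len \<beta>) (\<lambda>w. a \<beta> (fst w) * monom (snd w) \<beta>)"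
    using \<open>mi_len \<beta> \<le> k\<close> assms(2)
    by (intro symbol_class_mult[OF open_U] symbol_class_fst[OF open_U] symbol_class_monom[OF open_U]
        smooth_coeff) simp
  ultimately show "symbol_class U k (\<lambda>w. a \<beta> (fst w) * monom (snd w) \<beta>)"
    using symbol_class_mono by fastforce
qed

lemma symbol_class_q: "symbol_class U m q"
proof -
  have "symbol_class U m (\<lambda>w. \<Sum>\<beta>\<in>{\<beta>. mi_len \<beta> \<le> m}. a \<beta> (fst w) * monom (snd w) \<beta>)"
    by (rule symbol_class_coeff_sum) auto
  moreover have "symbol_class U m (\<lambda>w. - z)"
    by (rule symbol_class_mono[OF symbol_class_const]) simp
  ultimately show ?thesis
    unfolding q_def symb_def diff_conv_add_uminus by (rule symbol_class_add[OF open_U])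
qed

lemma symbol_class_s: "symbol_class U (2 * m) s"
proof -
  have re: "symbol_class U m (\<lambda>w. Re (q w))" and im: "symbol_class U m (\<lambda>w. Im (q w))"
    by (rule symbol_class_linear[OF open_U bounded_linear_Re symbol_class_q],
        rule symbol_class_linear[OF open_U bounded_linear_Im symbol_class_q])
  have "symbol_class U (m + m) (\<lambda>w. Re (q w) * Re (q w) + Im (q w) * Im (q w))"
    by (rule symbol_class_add[OF open_U symbol_class_mult[OF open_U re re] symbol_class_mult[OF open_U im im]])
  moreover have "s = (\<lambda>w. Re (q w) * Re (q w) + Im (q w) * Im (q w))"
    by (intro ext, simp only: s_def cmod_power2, simp only: power2_eq_square)
  ultimately show ?thesis by (simp add: mult_2)
qed

lemma lower_order_bound:
  assumes K: "compact K" "K \<subseteq> U"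
  obtains A where "0 \<le> A"
    "\<And>x \<xi>. x \<in> K \<Longrightarrow> norm (symb m a x \<xi> - princ m a x \<xi>) \<le> A * jbr \<xi> ^ (m - 1)"
proof -
  define B where "B = {\<beta>::'n \<Rightarrow> nat. mi_len \<beta> \<le> m \<and> mi_len \<beta> \<noteq> m}"
  have "symb m a x \<xi> = princ m a x \<xi> + (\<Sum>\<beta>\<in>B. a \<beta> x * monom \<xi> \<beta>)" for x \<xi>
  proof -
    have "{\<beta>::'n \<Rightarrow> nat. mi_len \<beta> \<le> m} = {\<beta>. mi_len \<beta> = m} \<union> B" by (auto simp: B_def)
    moreover have "finite {\<beta>::'n \<Rightarrow> nat. mi_len \<beta> \<le> m}" by (rule finite_mi_len_le)
    ultimately show ?thesis
      unfolding symb_def princ_def by (simp add: sum.union_disjoint B_def disjoint_iff)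
  qed
  moreover have "symbol_class U (m - 1) (\<lambda>w. \<Sum>\<beta>\<in>B. a \<beta> (fst w) * monom (snd w) \<beta>)"
    by (rule symbol_class_coeff_sum) (auto simp: B_def)
  then obtain C where C: "\<And>ds x \<xi>. set ds \<subseteq> coord_dirs \<Longrightarrow> x \<in> K \<Longrightarrow>
      norm (iter_deriv ds (\<lambda>w. \<Sum>\<beta>\<in>B. a \<beta> (fst w) * monom (snd w) \<beta>) (x, \<xi>))
        \<le> C ds * jbr \<xi> powr (real (m - 1) - real (xi_count ds))"
    using symbol_classE[OF _ K] by blast
  have "norm (\<Sum>\<beta>\<in>B. a \<beta> x * monom \<xi> \<beta>) \<le> max (C []) 0 * jbr \<xi> ^ (m - 1)" if "x \<in> K" for x \<xi>
  proof -
    have "norm (\<Sum>\<beta>\<in>B. a \<beta> x * monom \<xi> \<beta>) \<le> C [] * jbr \<xi> ^ (m - 1)"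
      using C[of "[]" x \<xi>] that by (simp add: powr_realpow jbr_pos)
    also have "\<dots> \<le> max (C []) 0 * jbr \<xi> ^ (m - 1)"
      using jbr_pos[of \<xi>] by (intro mult_right_mono) auto
    finally show ?thesis .
  qed
  ultimately show ?thesis using that[of "max (C []) 0"] by auto
qed

lemma elliptic_estimate_q:
  assumes K: "compact K" "K \<subseteq> U"
  obtains C where "0 < C" "\<And>x \<xi>. x \<in> K \<Longrightarrow> jbr \<xi> ^ m \<le> C * (1 + cmod (q (x, \<xi>)))"
proof (cases "m = 0")
  case True
  then show ?thesis using that[of 1] by simp
next
  case False
  obtain C0 where C0: "0 < C0" "\<And>x \<xi>. x \<in> K \<Longrightarrow> (norm \<xi>) ^ m / C0 \<le> norm (princ m a x \<xi>)"
    using elliptic[OF K] by blast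
  obtain A where A: "0 \<le> A"
    "\<And>x \<xi>. x \<in> K \<Longrightarrow> norm (symb m a x \<xi> - princ m a x \<xi>) \<le> A * jbr \<xi> ^ (m - 1)"
    using lower_order_bound[OF K] by blast
  define C where "C = max 2 (2 ^ (m + 1) * C0 * A) ^ m + 2 ^ (m + 1) * C0 * (1 + cmod z)"
  have "0 < 2 ^ (m + 1) * C0 * (1 + cmod z)" using C0(1) by (simp add: add_pos_nonneg)
  then have C: "0 < C" unfolding C_def by (simp add: add_nonneg_pos)
  have "jbr \<xi> ^ m \<le> C * (1 + cmod (q (x, \<xi>)))" if x: "x \<in> K" for x \<xi>
  proof -
    define t where "t = jbr \<xi>"
    have "cmod (princ m a x \<xi>) \<le> cmod (q (x, \<xi>)) + cmod z + A * t ^ (m - 1)"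
      using norm_triangle_ineq4[of "q (x, \<xi>) + z" "symb m a x \<xi> - princ m a x \<xi>"]
        norm_triangle_ineq[of "q (x, \<xi>)" z] A(2)[OF x, of \<xi>]
      by (simp add: q_def t_def)
    then have "norm \<xi> ^ m \<le> C0 * ((cmod (q (x, \<xi>)) + cmod z) + A * t ^ (m - 1))"
      using C0(2)[OF x, of \<xi>] C0(1)
      by (simp add: divide_le_eq mult.commute) (meson mult_left_mono order.trans less_imp_le)
    then have "t ^ m \<le> max 2 (2 ^ (m + 1) * C0 * A) ^ m + 2 ^ (m + 1) * C0 * (cmod (q (x, \<xi>)) + cmod z)"
      using False C0(1) A(1) jbr_ge_1[of \<xi>]
      by (intro power_le_absorb_lower_order) (auto simp: t_def jbr_def)
    also have "\<dots> \<le> C * (1 + cmod (q (x, \<xi>)))"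
      unfolding C_def using C0(1) by (simp add: algebra_simps)
    finally show ?thesis unfolding t_def .
  qed
  then show ?thesis using that C by blast
qed

lemma elliptic_estimate:
  assumes K: "compact K" "K \<subseteq> U"
  obtains C where "0 < C" "\<And>x \<xi>. x \<in> K \<Longrightarrow> jbr \<xi> ^ (2 * m) \<le> C * (1 + s (x, \<xi>))"
proof -
  obtain C where C: "0 < C" "\<And>x \<xi>. x \<in> K \<Longrightarrow> jbr \<xi> ^ m \<le> C * (1 + cmod (q (x, \<xi>)))"
    using elliptic_estimate_q[OF K] by blast
  have "jbr \<xi> ^ (2 * m) \<le> 2 * C\<^sup>2 * (1 + s (x, \<xi>))" if x: "x \<in> K" for x \<xi>
  proof -
    define r where "r = cmod (q (x, \<xi>))"
    have "jbr \<xi> ^ (2 * m) = jbr \<xi> ^ m * jbr \<xi> ^ m" by (simp add: mult_2 power_add)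
    also have "\<dots> \<le> (C * (1 + r)) * (C * (1 + r))"
      using C(2)[OF x, of \<xi>] C(1) jbr_pos[of \<xi>] by (intro mult_mono) (auto simp: r_def)
    also have "\<dots> = C\<^sup>2 * ((1 + r) * (1 + r))" by (simp add: power2_eq_square)
    also have "\<dots> \<le> C\<^sup>2 * (2 * (1 + r\<^sup>2))"
      using zero_le_power2[of "1 - r"] by (intro mult_left_mono) (auto simp: power2_eq_square algebra_simps)
    finally show ?thesis by (simp add: s_def r_def algebra_simps)
  qed
  then show ?thesis using that[of "2 * C\<^sup>2"] C(1) by simp
qed

lemma smooth_on_q: "smooth_on (U \<times> UNIV) q"
  by (rule symbol_class_smooth[OF symbol_class_q])

lemma smooth_on_s: "smooth_on (U \<times> UNIV) s"
  by (rule symbol_class_smooth[OF symbol_class_s])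

lemma has_derivative_at_cotangent:
  fixes f :: "(real^'n) \<times> (real^'n) \<Rightarrow> 'b::real_normed_vector"
  assumes "smooth_on (U \<times> UNIV) f" "w \<in> U \<times> UNIV"
  obtains f' where "(f has_derivative f') (at w)"
  using differentiable_on_imp_has_derivative[OF open_cotangent[OF open_U]
      smooth_on_imp_differentiable_on[OF assms(1), of "[]", simplified] assms(2)] by auto

lemma abs_dir_deriv_s_le:
  assumes w: "w \<in> U \<times> UNIV"
  shows "\<bar>dir_deriv v s w\<bar> \<le> 2 * sqrt (s w) * cmod (dir_deriv v q w)"
proof -
  obtain Q' where Q': "(q has_derivative Q') (at w)"
    using has_derivative_at_cotangent[OF smooth_on_q w] by blast
  have "s = (\<lambda>w. Re (q w) * Re (q w) + Im (q w) * Im (q w))"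
    by (intro ext, simp only: s_def cmod_power2, simp only: power2_eq_square)
  moreover have "((\<lambda>w. Re (q w) * Re (q w) + Im (q w) * Im (q w)) has_derivative
      (\<lambda>h. 2 * Re (cnj (q w) * Q' h))) (at w)"
    using Q' by (auto intro!: derivative_eq_intros simp: algebra_simps)
  ultimately have "dir_deriv v s w = 2 * Re (cnj (q w) * dir_deriv v q w)"
    using dir_deriv_at[OF Q'] by (simp add: dir_deriv_at)
  also have "\<bar>\<dots>\<bar> \<le> 2 * cmod (cnj (q w) * dir_deriv v q w)"
    using abs_Re_le_cmod[of "cnj (q w) * dir_deriv v q w"] by (simp add: abs_mult)
  finally show ?thesis by (simp add: s_def norm_mult)
qed

lemma s_first_deriv_bound:
  assumes K: "compact K" "K \<subseteq> U" and v: "v \<in> coord_dirs"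
  shows "\<exists>C. \<forall>\<alpha>\<in>{0<..1}. \<forall>x\<in>K. \<forall>\<xi>. \<bar>iter_deriv [v] s (x, \<xi>)\<bar> \<le>
    C * (\<alpha> + s (x, \<xi>)) * Lambda_inv \<alpha> (s (x, \<xi>)) * jbr \<xi> powr - real (xi_count [v])"
proof -
  obtain Ce where Ce: "0 < Ce" "\<And>x \<xi>. x \<in> K \<Longrightarrow> jbr \<xi> ^ (2 * m) \<le> Ce * (1 + s (x, \<xi>))"
    using elliptic_estimate[OF K] by blast
  obtain Cq where Cq: "\<And>ds x \<xi>. set ds \<subseteq> coord_dirs \<Longrightarrow> x \<in> K \<Longrightarrow>
      norm (iter_deriv ds q (x, \<xi>)) \<le> Cq ds * jbr \<xi> powr (real m - real (xi_count ds))"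
    using symbol_classE[OF symbol_class_q K] by blast
  have "\<bar>iter_deriv [v] s (x, \<xi>)\<bar> \<le> (2 * \<bar>Cq [v]\<bar> * sqrt Ce) * (\<alpha> + s (x, \<xi>)) *
      Lambda_inv \<alpha> (s (x, \<xi>)) * jbr \<xi> powr - real (xi_count [v])"
    if \<alpha>: "\<alpha> \<in> {0<..1}" and x: "x \<in> K" for \<alpha> x \<xi>
  proof -
    define \<sigma> where "\<sigma> = s (x, \<xi>)"
    define J where "J = jbr \<xi> powr - real (xi_count [v])"
    have \<sigma>: "0 \<le> \<sigma>" and J: "0 \<le> J" by (simp_all add: \<sigma>_def J_def s_nonneg)
    have "jbr \<xi> ^ (2 * m) = (jbr \<xi> ^ m)\<^sup>2"
      by (simp add: power_mult[symmetric] mult.commute)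
    then have "jbr \<xi> ^ m = sqrt (jbr \<xi> ^ (2 * m))"
      using jbr_pos[of \<xi>] by simp
    also have "\<dots> \<le> sqrt Ce * sqrt (1 + \<sigma>)"
      using Ce(2)[OF x, of \<xi>] by (simp add: \<sigma>_def real_sqrt_mult[symmetric])
    finally have jm: "jbr \<xi> ^ m \<le> sqrt Ce * sqrt (1 + \<sigma>)" .
    have "cmod (iter_deriv [v] q (x, \<xi>)) \<le> Cq [v] * jbr \<xi> ^ m * J"
      using Cq[of "[v]" x \<xi>] v x unfolding jbr_powr_diff by (simp add: J_def mult.assoc)
    also have "\<dots> \<le> \<bar>Cq [v]\<bar> * (sqrt Ce * sqrt (1 + \<sigma>)) * J"
      using jm J jbr_pos[of \<xi>] by (intro mult_right_mono mult_mono) auto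
    finally have dq: "cmod (iter_deriv [v] q (x, \<xi>)) \<le> \<bar>Cq [v]\<bar> * (sqrt Ce * sqrt (1 + \<sigma>)) * J" .
    have "\<bar>iter_deriv [v] s (x, \<xi>)\<bar> \<le> 2 * sqrt \<sigma> * cmod (iter_deriv [v] q (x, \<xi>))"
      using abs_dir_deriv_s_le[of "(x, \<xi>)" v] x K by (auto simp: \<sigma>_def)
    also have "\<dots> \<le> 2 * sqrt \<sigma> * (\<bar>Cq [v]\<bar> * (sqrt Ce * sqrt (1 + \<sigma>)) * J)"
      using dq \<sigma> by (intro mult_left_mono) auto
    also have "\<dots> = (2 * \<bar>Cq [v]\<bar> * sqrt Ce) * (sqrt \<sigma> * sqrt (1 + \<sigma>)) * J"
      by (simp add: algebra_simps)
    also have "\<dots> \<le> (2 * \<bar>Cq [v]\<bar> * sqrt Ce) * ((\<alpha> + \<sigma>) * Lambda_inv \<alpha> \<sigma>) * J"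
      using sqrt_mult_le_Lambda_inv[of \<alpha> \<sigma>] \<alpha> \<sigma> J Ce(1)
      by (intro mult_right_mono mult_left_mono) auto
    finally show ?thesis by (simp add: \<sigma>_def J_def mult.assoc)
  qed
  then show ?thesis by blast
qed

lemma s_higher_deriv_bound:
  assumes K: "compact K" "K \<subseteq> U" and ds: "set ds \<subseteq> coord_dirs" "2 \<le> length ds"
  shows "\<exists>C. \<forall>\<alpha>\<in>{0<..1}. \<forall>x\<in>K. \<forall>\<xi>. \<bar>iter_deriv ds s (x, \<xi>)\<bar> \<le>
    C * (\<alpha> + s (x, \<xi>)) * Lambda_inv \<alpha> (s (x, \<xi>)) ^ length ds * jbr \<xi> powr - real (xi_count ds)"
proof -
  obtain Ce where Ce: "0 < Ce" "\<And>x \<xi>. x \<in> K \<Longrightarrow> jbr \<xi> ^ (2 * m) \<le> Ce * (1 + s (x, \<xi>))"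
    using elliptic_estimate[OF K] by blast
  obtain Cs where Cs: "\<And>ds x \<xi>. set ds \<subseteq> coord_dirs \<Longrightarrow> x \<in> K \<Longrightarrow>
      norm (iter_deriv ds s (x, \<xi>)) \<le> Cs ds * jbr \<xi> powr (real (2 * m) - real (xi_count ds))"
    using symbol_classE[OF symbol_class_s K] by blast
  have "\<bar>iter_deriv ds s (x, \<xi>)\<bar> \<le> (\<bar>Cs ds\<bar> * Ce) * (\<alpha> + s (x, \<xi>)) *
      Lambda_inv \<alpha> (s (x, \<xi>)) ^ length ds * jbr \<xi> powr - real (xi_count ds)"
    if \<alpha>: "\<alpha> \<in> {0<..1}" and x: "x \<in> K" for \<alpha> x \<xi>
  proof -
    define \<sigma> where "\<sigma> = s (x, \<xi>)"
    define J where "J = jbr \<xi> powr - real (xi_count ds)"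
    have \<sigma>: "0 \<le> \<sigma>" and J: "0 \<le> J" by (simp_all add: \<sigma>_def J_def s_nonneg)
    have "\<bar>iter_deriv ds s (x, \<xi>)\<bar> \<le> Cs ds * jbr \<xi> ^ (2 * m) * J"
      using Cs[OF ds(1) x, of \<xi>] unfolding jbr_powr_diff by (simp add: J_def mult.assoc)
    also have "\<dots> \<le> \<bar>Cs ds\<bar> * (Ce * (1 + \<sigma>)) * J"
      using Ce(2)[OF x, of \<xi>] J jbr_pos[of \<xi>] by (intro mult_right_mono mult_mono) (auto simp: \<sigma>_def)
    also have "\<dots> = \<bar>Cs ds\<bar> * Ce * (\<alpha> + \<sigma>) * Lambda_inv \<alpha> \<sigma> ^ 2 * J"
      using one_plus_eq_Lambda_inv[of \<alpha> \<sigma>] \<alpha> \<sigma> by simp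
    also have "\<dots> \<le> \<bar>Cs ds\<bar> * Ce * (\<alpha> + \<sigma>) * Lambda_inv \<alpha> \<sigma> ^ length ds * J"
      using one_le_Lambda_inv[of \<alpha> \<sigma>] \<alpha> \<sigma> J Ce(1) ds(2)
      by (intro mult_right_mono mult_left_mono power_increasing) auto
    finally show ?thesis by (simp add: \<sigma>_def J_def)
  qed
  then show ?thesis by blast
qed

lemma s_deriv_bound:
  assumes K: "compact K" "K \<subseteq> U" and ds: "set ds \<subseteq> coord_dirs" "ds \<noteq> []"
  shows "\<exists>C. \<forall>\<alpha>\<in>{0<..1}. \<forall>x\<in>K. \<forall>\<xi>. \<bar>iter_deriv ds s (x, \<xi>)\<bar> \<le>
    C * (\<alpha> + s (x, \<xi>)) * Lambda_inv \<alpha> (s (x, \<xi>)) ^ length ds * jbr \<xi> powr - real (xi_count ds)"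
proof (cases "length ds = 1")
  case True
  then obtain v where "ds = [v]" by (auto simp: length_Suc_conv)
  then show ?thesis using s_first_deriv_bound[OF K, of v] ds(1) by simp
next
  case False
  then have "2 \<le> length ds" using ds(2) by (cases ds) (auto simp: Suc_le_eq)
  then show ?thesis by (rule s_higher_deriv_bound[OF K ds(1)])
qed

definition weight :: "real \<Rightarrow> real \<Rightarrow> (real^'n) \<times> (real^'n) \<Rightarrow> real" where
  "weight l \<alpha> w = (1 + s w / \<alpha>) powr l"

lemma weight_nonneg: "0 \<le> weight l \<alpha> w"
  by (simp add: weight_def)

lemma weight_diff_one:
  assumes "0 < \<alpha>"
  shows "weight (l - 1) \<alpha> w = weight l \<alpha> w * \<alpha> / (\<alpha> + s w)"
proof -
  have pos: "0 < 1 + s w / \<alpha>" using assms s_nonneg[of w] by (simp add: add_pos_nonneg)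
  then have "weight (l - 1) \<alpha> w = weight l \<alpha> w / (1 + s w / \<alpha>)"
    by (simp add: weight_def powr_diff)
  also have "\<dots> = weight l \<alpha> w * \<alpha> / (\<alpha> + s w)"
    using assms pos by (simp add: field_simps)
  finally show ?thesis .
qed

lemma has_derivative_weight:
  assumes \<alpha>: "0 < \<alpha>" and S': "(s has_derivative S') (at w)"
  shows "(weight l \<alpha> has_derivative (\<lambda>h. l / \<alpha> * (weight (l - 1) \<alpha> w * S' h))) (at w)"
proof -
  define X where "X = 1 + s w / \<alpha>"
  have X: "0 < X" unfolding X_def using \<alpha> s_nonneg[of w] by (simp add: add_pos_nonneg)
  have g: "((\<lambda>w. 1 + s w / \<alpha>) has_derivative (\<lambda>h. S' h / \<alpha>)) (at w)"
    using S' \<alpha> by (auto intro!: derivative_eq_intros)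
  have "((\<lambda>w. (1 + s w / \<alpha>) powr l) has_derivative
      (\<lambda>h. X powr l * (0 * ln X + S' h / \<alpha> * l / X))) (at w)"
    using has_derivative_powr[where f="\<lambda>_. l" and f'="\<lambda>_. 0" and x=w and X=UNIV,
        OF g has_derivative_const X[unfolded X_def]]
    by (simp add: X_def)
  moreover have "(\<lambda>h. X powr l * (0 * ln X + S' h / \<alpha> * l / X)) =
      (\<lambda>h. l / \<alpha> * (weight (l - 1) \<alpha> w * S' h))"
    using X by (simp add: fun_eq_iff weight_def X_def[symmetric] powr_diff)
  ultimately show ?thesis by (simp add: weight_def[abs_def])
qed

lemma dir_deriv_weight:
  assumes "0 < \<alpha>" "w \<in> U \<times> UNIV"
  shows "dir_deriv v (weight l \<alpha>) w = l / \<alpha> * (weight (l - 1) \<alpha> w * dir_deriv v s w)"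
proof -
  obtain S' where S': "(s has_derivative S') (at w)"
    using has_derivative_at_cotangent[OF smooth_on_s assms(2)] by blast
  show ?thesis using dir_deriv_at[OF has_derivative_weight[OF assms(1) S']] dir_deriv_at[OF S'] by simp
qed

lemma smooth_on_weight:
  assumes \<alpha>: "0 < \<alpha>"
  shows "smooth_on (U \<times> UNIV) (weight l \<alpha>)"
proof -
  note V = open_cotangent[OF open_U]
  have "iter_deriv vs (weight l \<alpha>) differentiable_on U \<times> UNIV" if "length vs \<le> k" for k l vs
    using that
  proof (induction k arbitrary: l vs)
    case 0
    have "weight l \<alpha> differentiable (at w)" if "w \<in> U \<times> UNIV" for w
      using has_derivative_at_cotangent[OF smooth_on_s that] has_derivative_weight[OF \<alpha>]
      unfolding differentiable_def by metis
    then show ?case using 0 by (simp add: differentiable_at_imp_differentiable_on)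
  next
    case (Suc k)
    show ?case
    proof (cases vs rule: rev_cases)
      case Nil then show ?thesis using Suc.IH[of "[]"] by simp
    next
      case (snoc ws v)
      have ws: "length ws \<le> k" using Suc.prems snoc by simp
      let ?P = "\<lambda>w. weight (l - 1) \<alpha> w * dir_deriv v s w"
      have "iter_deriv us ?P differentiable_on U \<times> UNIV" if "length us \<le> length ws" for us
      proof (rule differentiable_on_iter_deriv_mult[OF V])
        show "iter_deriv us' (weight (l - 1) \<alpha>) differentiable_on U \<times> UNIV"
          if "length us' \<le> length us" for us'
          using Suc.IH that \<open>length us \<le> length ws\<close> ws by simp
        show "iter_deriv us' (dir_deriv v s) differentiable_on U \<times> UNIV" for us'
          using smooth_on_imp_differentiable_on[OF smooth_on_s, of "us' @ [v]"]
          by (simp add: iter_deriv_append)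
      qed
      then have "iter_deriv ws (\<lambda>w. l / \<alpha> * ?P w) differentiable_on U \<times> UNIV"
        by (intro differentiable_on_iter_deriv_linear[OF bounded_linear_mult_right V])
      moreover have "iter_deriv ws (\<lambda>w. l / \<alpha> * ?P w) w = iter_deriv vs (weight l \<alpha>) w"
        if "w \<in> U \<times> UNIV" for w
        unfolding snoc iter_deriv_append
        by (rule iter_deriv_cong_open[OF V _ that]) (simp add: dir_deriv_weight[OF \<alpha>])
      ultimately show ?thesis by (rule differentiable_on_cong_open[OF V])
    qed
  qed
  then show ?thesis unfolding smooth_on_def by blast
qed

lemma iter_deriv_weight_snoc:
  assumes \<alpha>: "0 < \<alpha>" and w: "w \<in> U \<times> UNIV"
  shows "iter_deriv (vs @ [v]) (weight l \<alpha>) w = l / \<alpha> *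
    (\<Sum>(b, c)\<leftarrow>splits vs. iter_deriv b (weight (l - 1) \<alpha>) w * iter_deriv (c @ [v]) s w)"
proof -
  note V = open_cotangent[OF open_U]
  have sW: "smooth_on (U \<times> UNIV) (weight (l - 1) \<alpha>)" by (rule smooth_on_weight[OF \<alpha>])
  have sS: "smooth_on (U \<times> UNIV) (dir_deriv v s)"
    using smooth_on_iter_deriv[OF smooth_on_s, of "[v]"] by simp
  have "iter_deriv (vs @ [v]) (weight l \<alpha>) w =
      iter_deriv vs (\<lambda>w. l / \<alpha> * (weight (l - 1) \<alpha> w * dir_deriv v s w)) w"
    unfolding iter_deriv_append
    by (rule iter_deriv_cong_open[OF V _ w]) (simp add: dir_deriv_weight[OF \<alpha>])
  also have "\<dots> = l / \<alpha> * iter_deriv vs (\<lambda>w. weight (l - 1) \<alpha> w * dir_deriv v s w) w"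
    by (intro iter_deriv_linear[OF bounded_linear_mult_right V _ w] smooth_on_imp_differentiable_on
        smooth_on_mult[OF V sW sS])
  also have "iter_deriv vs (\<lambda>w. weight (l - 1) \<alpha> w * dir_deriv v s w) w =
      (\<Sum>(b, c)\<leftarrow>splits vs. iter_deriv b (weight (l - 1) \<alpha>) w * iter_deriv (c @ [v]) s w)"
    by (subst iter_deriv_mult[OF V _ _ w]) (auto intro: smooth_on_imp_differentiable_on sW sS
        simp: iter_deriv_append case_prod_beta')
  finally show ?thesis .
qed


lemma iter_deriv_weight_snoc_le:
  assumes \<alpha>0: "0 < \<alpha>" and w: "(x, \<xi>) \<in> U \<times> UNIV"
    and Cw: "\<And>b c. (b, c) \<in> set (splits vs) \<Longrightarrow> \<bar>iter_deriv b (weight (l - 1) \<alpha>) (x, \<xi>)\<bar> \<le>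
      Cw b * weight (l - 1) \<alpha> (x, \<xi>) * Lambda_inv \<alpha> (s (x, \<xi>)) ^ length b * jbr \<xi> powr - real (xi_count b)"
    and Cs: "\<And>b c. (b, c) \<in> set (splits vs) \<Longrightarrow> \<bar>iter_deriv (c @ [v]) s (x, \<xi>)\<bar> \<le>
      Cs c * (\<alpha> + s (x, \<xi>)) * Lambda_inv \<alpha> (s (x, \<xi>)) ^ length (c @ [v]) *
        jbr \<xi> powr - real (xi_count (c @ [v]))"
  shows "\<bar>iter_deriv (vs @ [v]) (weight l \<alpha>) (x, \<xi>)\<bar> \<le> (\<Sum>(b, c)\<leftarrow>splits vs. \<bar>l\<bar> * \<bar>Cw b\<bar> * \<bar>Cs c\<bar>) *
    weight l \<alpha> (x, \<xi>) * Lambda_inv \<alpha> (s (x, \<xi>)) ^ length (vs @ [v]) *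
    jbr \<xi> powr - real (xi_count (vs @ [v]))"
proof -
  define \<sigma> where "\<sigma> = s (x, \<xi>)"
  define h where "h = weight l \<alpha> (x, \<xi>)"
  define R where "R = Lambda_inv \<alpha> \<sigma>"
  define X where "X = h * R ^ length (vs @ [v]) * jbr \<xi> powr - real (xi_count (vs @ [v]))"
  define T where "T = (\<lambda>(b, c). l / \<alpha> * (iter_deriv b (weight (l - 1) \<alpha>) (x, \<xi>) *
      iter_deriv (c @ [v]) s (x, \<xi>)))"
  have \<sigma>: "0 \<le> \<sigma>" by (simp add: \<sigma>_def s_nonneg)
  have R: "0 \<le> R" unfolding R_def by (rule Lambda_inv_nonneg[OF \<alpha>0 \<sigma>])
  have "\<bar>T (b, c)\<bar> \<le> \<bar>l\<bar> * \<bar>Cw b\<bar> * \<bar>Cs c\<bar> * X" if bc: "(b, c) \<in> set (splits vs)" for b c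
  proof -
    have "\<bar>T (b, c)\<bar> \<le>
        \<bar>l\<bar> * \<bar>Cw b\<bar> * \<bar>Cs c\<bar> * h * ((R ^ length b * jbr \<xi> powr - real (xi_count b)) *
          (R ^ length (c @ [v]) * jbr \<xi> powr - real (xi_count (c @ [v]))))"
      unfolding T_def prod.case
    proof (rule leibniz_term_bound[OF \<alpha>0 \<sigma>])
      show "\<bar>iter_deriv b (weight (l - 1) \<alpha>) (x, \<xi>)\<bar> \<le>
          Cw b * (h * \<alpha> / (\<alpha> + \<sigma>)) * (R ^ length b * jbr \<xi> powr - real (xi_count b))"
        using Cw[OF bc] weight_diff_one[OF \<alpha>0] by (simp add: h_def \<sigma>_def R_def mult.assoc)
      show "\<bar>iter_deriv (c @ [v]) s (x, \<xi>)\<bar> \<le>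
          Cs c * (\<alpha> + \<sigma>) * (R ^ length (c @ [v]) * jbr \<xi> powr - real (xi_count (c @ [v])))"
        using Cs[OF bc] by (simp add: \<sigma>_def R_def mult.assoc)
    qed (use R in \<open>auto simp: h_def weight_nonneg\<close>)
    also have "\<dots> = \<bar>l\<bar> * \<bar>Cw b\<bar> * \<bar>Cs c\<bar> * X"
    proof -
      have "length b + length (c @ [v]) = length (vs @ [v])"
        using splits_props(1)[OF bc] by simp
      then have e1: "R ^ length b * R ^ length (c @ [v]) = R ^ length (vs @ [v])"
        by (metis power_add)
      have "- real (xi_count b) + - real (xi_count (c @ [v])) = - real (xi_count (vs @ [v]))"
        using xi_count_splits[OF bc] by (simp add: xi_count_append)
      then have e2: "jbr \<xi> powr - real (xi_count b) * jbr \<xi> powr - real (xi_count (c @ [v])) =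
          jbr \<xi> powr - real (xi_count (vs @ [v]))"
        by (metis powr_add)
      show ?thesis unfolding X_def e1[symmetric] e2[symmetric] by (simp add: algebra_simps)
    qed
    finally show ?thesis .
  qed
  then have "norm (\<Sum>y\<leftarrow>splits vs. T y) \<le> (\<Sum>(b, c)\<leftarrow>splits vs. \<bar>l\<bar> * \<bar>Cw b\<bar> * \<bar>Cs c\<bar> * X)"
    by (intro norm_sum_list_le) auto
  also have "\<dots> = (\<Sum>(b, c)\<leftarrow>splits vs. \<bar>l\<bar> * \<bar>Cw b\<bar> * \<bar>Cs c\<bar>) * X"
    using sum_list_mult_const[of "\<lambda>(b, c). \<bar>l\<bar> * \<bar>Cw b\<bar> * \<bar>Cs c\<bar>" X "splits vs"]
    by (simp add: case_prod_beta')
  finally have "\<bar>\<Sum>y\<leftarrow>splits vs. T y\<bar> \<le> (\<Sum>(b, c)\<leftarrow>splits vs. \<bar>l\<bar> * \<bar>Cw b\<bar> * \<bar>Cs c\<bar>) * X"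
    by simp
  moreover have "iter_deriv (vs @ [v]) (weight l \<alpha>) (x, \<xi>) = (\<Sum>y\<leftarrow>splits vs. T y)"
    using iter_deriv_weight_snoc[OF \<alpha>0 w, of vs v l]
    by (simp add: T_def sum_list_const_mult[symmetric] case_prod_beta')
  ultimately show ?thesis by (simp add: X_def h_def R_def \<sigma>_def mult.assoc)
qed

lemma weight_deriv_bound:
  assumes K: "compact K" "K \<subseteq> U" and ds: "set ds \<subseteq> coord_dirs"
  shows "\<exists>C. \<forall>\<alpha>\<in>{0<..1}. \<forall>x\<in>K. \<forall>\<xi>. \<bar>iter_deriv ds (weight l \<alpha>) (x, \<xi>)\<bar> \<le>
    C * weight l \<alpha> (x, \<xi>) * Lambda_inv \<alpha> (s (x, \<xi>)) ^ length ds * jbr \<xi> powr - real (xi_count ds)"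
  using ds
proof (induction "length ds" arbitrary: ds l rule: less_induct)
  case less
  show ?case
  proof (cases ds rule: rev_cases)
    case Nil
    then show ?thesis by (intro exI[of _ 1]) (simp add: weight_nonneg)
  next
    case (snoc vs v)
    have v: "v \<in> coord_dirs" and vs: "set vs \<subseteq> coord_dirs" using less.prems snoc by auto
    have "\<forall>b. \<exists>C. set b \<subseteq> coord_dirs \<longrightarrow> length b < length ds \<longrightarrow>
        (\<forall>\<alpha>\<in>{0<..1}. \<forall>x\<in>K. \<forall>\<xi>. \<bar>iter_deriv b (weight (l - 1) \<alpha>) (x, \<xi>)\<bar> \<le> C * weight (l - 1) \<alpha> (x, \<xi>) *
          Lambda_inv \<alpha> (s (x, \<xi>)) ^ length b * jbr \<xi> powr - real (xi_count b))"
      using less.hyps by blast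
    then obtain Cw where Cw: "\<And>b \<alpha> x \<xi>. set b \<subseteq> coord_dirs \<Longrightarrow> length b < length ds \<Longrightarrow>
        \<alpha> \<in> {0<..1} \<Longrightarrow> x \<in> K \<Longrightarrow> \<bar>iter_deriv b (weight (l - 1) \<alpha>) (x, \<xi>)\<bar> \<le>
          Cw b * weight (l - 1) \<alpha> (x, \<xi>) * Lambda_inv \<alpha> (s (x, \<xi>)) ^ length b * jbr \<xi> powr - real (xi_count b)"
      by metis
    have "\<forall>c. \<exists>C. set c \<subseteq> coord_dirs \<longrightarrow>
        (\<forall>\<alpha>\<in>{0<..1}. \<forall>x\<in>K. \<forall>\<xi>. \<bar>iter_deriv (c @ [v]) s (x, \<xi>)\<bar> \<le> C * (\<alpha> + s (x, \<xi>)) *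
          Lambda_inv \<alpha> (s (x, \<xi>)) ^ length (c @ [v]) * jbr \<xi> powr - real (xi_count (c @ [v])))"
    proof
      fix c :: "((real^'n) \<times> (real^'n)) list"
      show "\<exists>C. set c \<subseteq> coord_dirs \<longrightarrow>
        (\<forall>\<alpha>\<in>{0<..1}. \<forall>x\<in>K. \<forall>\<xi>. \<bar>iter_deriv (c @ [v]) s (x, \<xi>)\<bar> \<le> C * (\<alpha> + s (x, \<xi>)) *
          Lambda_inv \<alpha> (s (x, \<xi>)) ^ length (c @ [v]) * jbr \<xi> powr - real (xi_count (c @ [v])))"
        using s_deriv_bound[OF K, of "c @ [v]"] v by auto
    qed
    then obtain Cs where Cs: "\<And>c \<alpha> x \<xi>. set c \<subseteq> coord_dirs \<Longrightarrow> \<alpha> \<in> {0<..1} \<Longrightarrow> x \<in> K \<Longrightarrow>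
        \<bar>iter_deriv (c @ [v]) s (x, \<xi>)\<bar> \<le> Cs c * (\<alpha> + s (x, \<xi>)) *
          Lambda_inv \<alpha> (s (x, \<xi>)) ^ length (c @ [v]) * jbr \<xi> powr - real (xi_count (c @ [v]))"
      by metis
    have "\<bar>iter_deriv ds (weight l \<alpha>) (x, \<xi>)\<bar> \<le> (\<Sum>(b, c)\<leftarrow>splits vs. \<bar>l\<bar> * \<bar>Cw b\<bar> * \<bar>Cs c\<bar>) *
        weight l \<alpha> (x, \<xi>) * Lambda_inv \<alpha> (s (x, \<xi>)) ^ length ds * jbr \<xi> powr - real (xi_count ds)"
      if \<alpha>: "\<alpha> \<in> {0<..1}" and x: "x \<in> K" for \<alpha> x \<xi>
      unfolding snoc
    proof (rule iter_deriv_weight_snoc_le)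
      fix b c assume bc: "(b, c) \<in> set (splits vs)"
      then have "set b \<subseteq> coord_dirs" "set c \<subseteq> coord_dirs" "length b < length ds"
        using splits_props(1-3)[OF bc] vs snoc by auto
      then show "\<bar>iter_deriv b (weight (l - 1) \<alpha>) (x, \<xi>)\<bar> \<le>
          Cw b * weight (l - 1) \<alpha> (x, \<xi>) * Lambda_inv \<alpha> (s (x, \<xi>)) ^ length b * jbr \<xi> powr - real (xi_count b)"
        and "\<bar>iter_deriv (c @ [v]) s (x, \<xi>)\<bar> \<le> Cs c * (\<alpha> + s (x, \<xi>)) *
          Lambda_inv \<alpha> (s (x, \<xi>)) ^ length (c @ [v]) * jbr \<xi> powr - real (xi_count (c @ [v]))"
        using Cw[OF _ _ \<alpha> x] Cs[OF _ \<alpha> x] by blast+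
    qed (use \<alpha> x K in auto)
    then show ?thesis by blast
  qed
qed

end

theorem proposition4p1:
  fixes U :: "(real^'n) set"
    and m :: nat
    and a :: "('n \<Rightarrow> nat) \<Rightarrow> real^'n \<Rightarrow> complex"
    and z :: complex
  assumes U_open: "open U"
    and smooth: "\<And>\<beta>. mi_len \<beta> \<le> m \<Longrightarrow> smooth_on U (a \<beta>)"
    and elliptic: "\<And>K. compact K \<Longrightarrow> K \<subseteq> U \<Longrightarrow>
        \<exists>C>0. \<forall>x\<in>K. \<forall>\<xi>. norm (princ m a x \<xi>) \<ge> (norm \<xi>) ^ m / C"
  shows "\<exists>\<alpha>0>0. \<forall>K l (as :: 'n list) (bs :: 'n list). compact K \<longrightarrow> K \<subseteq> U \<longrightarrow>
     (\<exists>C. \<forall>\<alpha>\<in>{0<..\<alpha>0}. \<forall>x\<in>K. \<forall>\<xi>.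
        let s = (\<lambda>(y, \<eta>). (cmod (symb m a y \<eta> - z))\<^sup>2);
            \<Lambda> = ((\<alpha> + s (x, \<xi>)) / (1 + s (x, \<xi>))) powr (1/2)
        in \<bar>iter_deriv (map dx as @ map dxi bs) (\<lambda>w. (1 + s w / \<alpha>) powr l) (x, \<xi>)\<bar>
           \<le> C * (1 + s (x, \<xi>) / \<alpha>) powr l * \<Lambda> powr (- real (length as + length bs))
               * jbr \<xi> powr (- real (length bs)))"
proof -
  interpret elliptic_operator U m a z
    using U_open smooth elliptic by unfold_locales
  have s_eq: "(\<lambda>(y, \<eta>). (cmod (symb m a y \<eta> - z))\<^sup>2) = s"
    by (auto simp: s_def q_def)
  have weight_eq: "(\<lambda>w. (1 + s w / \<alpha>) powr l) = weight l \<alpha>" for l \<alpha>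
    by (simp add: fun_eq_iff weight_def)
  have "\<exists>C. \<forall>\<alpha>\<in>{0<..1}. \<forall>x\<in>K. \<forall>\<xi>.
      \<bar>iter_deriv (map dx as @ map dxi bs) (weight l \<alpha>) (x, \<xi>)\<bar> \<le> C * weight l \<alpha> (x, \<xi>) *
        (((\<alpha> + s (x, \<xi>)) / (1 + s (x, \<xi>))) powr (1/2)) powr (- real (length as + length bs)) *
        jbr \<xi> powr (- real (length bs))"
    if "compact K" "K \<subseteq> U" for K l as bs
    using weight_deriv_bound[OF that set_dx_dxi_subset, of as bs l]
    by (simp add: xi_count_dx_dxi Lambda_inv_power s_nonneg)
  then show ?thesis
    unfolding Let_def s_eq weight_eq by (intro exI[of _ 1]) (simp add: weight_def)
qed

end
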